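(* If a first-order theory $T$ is positively model-complete, then every homomorphism between models of $T$ is elementary.
   Context: A homomorphism of $\mathscr L$-structures preserves atomic sentences with parameters; it is elementary if it preserves (and reflects) all first-order sentences with parameters. A homomorphism $f:A\to B$ is an immersion if for every positive existential (coherent) sentence $\phi(\bar a)$ with parameters in $A$ — a prenex existential formula containing no negation — $B\models\phi(f\bar a)$ implies $A\models\phi(\bar a)$. $T$ is positively model-complete if every homomorphism between models of $T$ is an immersion. *)

theory Defs
  imports Main
begin

text \<open>A language is given by function symbols of type 'f and relation symbols
of type 'r together with arity functions fa and ra. Constants are 0-ary
function symbols. Variables are natural numbers.\<close>

datatype 'f trm = Var nat | Fn 'f "'f trm list"

datatype ('f, 'r) fm =
    Bot
  | Top
  | Eq "'f trm" "'f trm"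
  | Rel 'r "'f trm list"
  | Neg "('f, 'r) fm"
  | Conj "('f, 'r) fm" "('f, 'r) fm"
  | Disj "('f, 'r) fm" "('f, 'r) fm"
  | Imp "('f, 'r) fm" "('f, 'r) fm"
  | Ex nat "('f, 'r) fm"
  | All nat "('f, 'r) fm"

fun wft :: "('f \<Rightarrow> nat) \<Rightarrow> 'f trm \<Rightarrow> bool" where
  "wft fa (Var n) = True"
| "wft fa (Fn f ts) = (length ts = fa f \<and> (\<forall>t\<in>set ts. wft fa t))"

fun wff :: "('f \<Rightarrow> nat) \<Rightarrow> ('r \<Rightarrow> nat) \<Rightarrow> ('f, 'r) fm \<Rightarrow> bool" where
  "wff fa ra Bot = True"
| "wff fa ra Top = True"
| "wff fa ra (Eq t u) = (wft fa t \<and> wft fa u)"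
| "wff fa ra (Rel r ts) = (length ts = ra r \<and> (\<forall>t\<in>set ts. wft fa t))"
| "wff fa ra (Neg p) = wff fa ra p"
| "wff fa ra (Conj p q) = (wff fa ra p \<and> wff fa ra q)"
| "wff fa ra (Disj p q) = (wff fa ra p \<and> wff fa ra q)"
| "wff fa ra (Imp p q) = (wff fa ra p \<and> wff fa ra q)"
| "wff fa ra (Ex x p) = wff fa ra p"
| "wff fa ra (All x p) = wff fa ra p"

fun fvt :: "'f trm \<Rightarrow> nat set" where
  "fvt (Var n) = {n}"
| "fvt (Fn f ts) = (\<Union>t\<in>set ts. fvt t)"

fun fv :: "('f, 'r) fm \<Rightarrow> nat set" where
  "fv Bot = {}"
| "fv Top = {}"
| "fv (Eq t u) = fvt t \<union> fvt u"
| "fv (Rel r ts) = (\<Union>t\<in>set ts. fvt t)"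
| "fv (Neg p) = fv p"
| "fv (Conj p q) = fv p \<union> fv q"
| "fv (Disj p q) = fv p \<union> fv q"
| "fv (Imp p q) = fv p \<union> fv q"
| "fv (Ex x p) = fv p - {x}"
| "fv (All x p) = fv p - {x}"

definition sentence :: "('f \<Rightarrow> nat) \<Rightarrow> ('r \<Rightarrow> nat) \<Rightarrow> ('f, 'r) fm \<Rightarrow> bool" where
  "sentence fa ra p \<longleftrightarrow> wff fa ra p \<and> fv p = {}"

definition is_theory :: "('f \<Rightarrow> nat) \<Rightarrow> ('r \<Rightarrow> nat) \<Rightarrow> ('f, 'r) fm set \<Rightarrow> bool" where
  "is_theory fa ra T \<longleftrightarrow> (\<forall>p\<in>T. sentence fa ra p)"

fun atomic :: "('f, 'r) fm \<Rightarrow> bool" where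
  "atomic (Eq t u) = True"
| "atomic (Rel r ts) = True"
| "atomic _ = False"

fun pos_qf :: "('f, 'r) fm \<Rightarrow> bool" where
  "pos_qf Bot = True"
| "pos_qf Top = True"
| "pos_qf (Eq t u) = True"
| "pos_qf (Rel r ts) = True"
| "pos_qf (Conj p q) = (pos_qf p \<and> pos_qf q)"
| "pos_qf (Disj p q) = (pos_qf p \<and> pos_qf q)"
| "pos_qf _ = False"

definition coherent :: "('f, 'r) fm \<Rightarrow> bool" where
  "coherent p \<longleftrightarrow> (\<exists>xs q. p = foldr Ex xs q \<and> pos_qf q)"

record ('a, 'f, 'r) struc =
  dom :: "'a set"
  fint :: "'f \<Rightarrow> 'a list \<Rightarrow> 'a"
  rint :: "'r \<Rightarrow> 'a list \<Rightarrow> bool"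

definition is_struc :: "('f \<Rightarrow> nat) \<Rightarrow> ('a, 'f, 'r) struc \<Rightarrow> bool" where
  "is_struc fa M \<longleftrightarrow> dom M \<noteq> {} \<and>
     (\<forall>f xs. length xs = fa f \<and> set xs \<subseteq> dom M \<longrightarrow> fint M f xs \<in> dom M)"

fun eval :: "('a, 'f, 'r) struc \<Rightarrow> (nat \<Rightarrow> 'a) \<Rightarrow> 'f trm \<Rightarrow> 'a" where
  "eval M s (Var n) = s n"
| "eval M s (Fn f ts) = fint M f (map (eval M s) ts)"

fun sat :: "('a, 'f, 'r) struc \<Rightarrow> (nat \<Rightarrow> 'a) \<Rightarrow> ('f, 'r) fm \<Rightarrow> bool" where
  "sat M s Bot = False"
| "sat M s Top = True"
| "sat M s (Eq t u) = (eval M s t = eval M s u)"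
| "sat M s (Rel r ts) = rint M r (map (eval M s) ts)"
| "sat M s (Neg p) = (\<not> sat M s p)"
| "sat M s (Conj p q) = (sat M s p \<and> sat M s q)"
| "sat M s (Disj p q) = (sat M s p \<or> sat M s q)"
| "sat M s (Imp p q) = (sat M s p \<longrightarrow> sat M s q)"
| "sat M s (Ex x p) = (\<exists>a\<in>dom M. sat M (s(x := a)) p)"
| "sat M s (All x p) = (\<forall>a\<in>dom M. sat M (s(x := a)) p)"

definition is_model :: "('f \<Rightarrow> nat) \<Rightarrow> ('f, 'r) fm set \<Rightarrow> ('a, 'f, 'r) struc \<Rightarrow> bool" where
  "is_model fa T M \<longleftrightarrow> is_struc fa M \<and>
     (\<forall>p\<in>T. \<forall>s. range s \<subseteq> dom M \<longrightarrow> sat M s p)"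

text \<open>A formula with parameters from M is a well-formed formula together with an
assignment of its variables into dom M.\<close>

definition hom :: "('f \<Rightarrow> nat) \<Rightarrow> ('r \<Rightarrow> nat) \<Rightarrow> ('a, 'f, 'r) struc \<Rightarrow> ('b, 'f, 'r) struc
    \<Rightarrow> ('a \<Rightarrow> 'b) \<Rightarrow> bool" where
  "hom fa ra A B h \<longleftrightarrow> h ` dom A \<subseteq> dom B \<and>
     (\<forall>p s. wff fa ra p \<and> atomic p \<and> range s \<subseteq> dom A \<and> sat A s p \<longrightarrow> sat B (h \<circ> s) p)"

definition elementary :: "('f \<Rightarrow> nat) \<Rightarrow> ('r \<Rightarrow> nat) \<Rightarrow> ('a, 'f, 'r) struc \<Rightarrow> ('b, 'f, 'r) struc
    \<Rightarrow> ('a \<Rightarrow> 'b) \<Rightarrow> bool" where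
  "elementary fa ra A B h \<longleftrightarrow> hom fa ra A B h \<and>
     (\<forall>p s. wff fa ra p \<and> range s \<subseteq> dom A \<longrightarrow> (sat A s p \<longleftrightarrow> sat B (h \<circ> s) p))"

definition immersion :: "('f \<Rightarrow> nat) \<Rightarrow> ('r \<Rightarrow> nat) \<Rightarrow> ('a, 'f, 'r) struc \<Rightarrow> ('b, 'f, 'r) struc
    \<Rightarrow> ('a \<Rightarrow> 'b) \<Rightarrow> bool" where
  "immersion fa ra A B h \<longleftrightarrow> hom fa ra A B h \<and>
     (\<forall>p s. wff fa ra p \<and> coherent p \<and> range s \<subseteq> dom A \<and> sat B (h \<circ> s) p \<longrightarrow> sat A s p)"

text \<open>Positive model-completeness, relativised to carrier types 'a (source) and
'b (target): every homomorphism from a model of T with carrier in 'a to a model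
of T with carrier in 'b is an immersion. (HOL cannot quantify over all types.)\<close>

definition pos_model_complete :: "('f \<Rightarrow> nat) \<Rightarrow> ('r \<Rightarrow> nat) \<Rightarrow> ('f, 'r) fm set
    \<Rightarrow> 'a itself \<Rightarrow> 'b itself \<Rightarrow> bool" where
  "pos_model_complete fa ra T (_::'a itself) (_::'b itself) \<longleftrightarrow>
     (\<forall>(A::('a, 'f, 'r) struc) (B::('b, 'f, 'r) struc) h.
        is_model fa T A \<and> is_model fa T B \<and> hom fa ra A B h \<longrightarrow> immersion fa ra A B h)"

end

theory Submission
  imports Defs
begin

text \<open>
  The proof is by induction on formulas, simultaneously for all homomorphisms between models
  of T. Atomic formulas are preserved by homomorphisms and reflected by immersions. If
  \<open>\<exists>x. \<phi>\<close> holds in N at the image of parameters from M under k, we use that k is an immersion: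
  every finite part of the atomic diagram of N can be pulled back into M over the parameters
  of M. Hence an ultrapower C of M receives a homomorphism g from N that agrees on M with the
  diagonal elementary embedding d of M into C. The induction hypothesis for g moves the
  witness into C, and elementarity of d reflects it back to M; \<open>\<forall>\<close> is dual.

  HOL cannot quantify over carrier types inside an induction, so the induction is carried out
  for structures on the single type \<open>nat + 'f + 'r\<close>. It is large enough to code all Skolem
  terms over its own elements, so by downward Loewenheim-Skolem every structure has elementary
  substructures on it containing any prescribed family of parameters; both the ultrapower C
  and the given homomorphism are reduced to such structures.
\<close>

lemma finite_fvt: "finite (fvt t)"
  by (induction t) auto

lemma finite_fv: "finite (fv p)"
  by (induction p) (auto simp: finite_fvt)

lemma eval_cong: "(\<forall>n\<in>fvt t. s n = s' n) \<Longrightarrow> eval M s t = eval M s' t"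
proof (induction t)
  case (Fn f ts)
  have "map (eval M s) ts = map (eval M s') ts" by (rule map_cong) (use Fn in auto)
  then show ?case by (simp only: eval.simps)
qed simp

lemma sat_cong: "(\<forall>n\<in>fv p. s n = s' n) \<Longrightarrow> sat M s p = sat M s' p"
proof (induction p arbitrary: s s')
  case (Eq t u) then show ?case using eval_cong[of t s s' M] eval_cong[of u s s' M] by auto
next
  case (Rel r ts)
  have "map (eval M s) ts = map (eval M s') ts" by (rule map_cong[OF refl], rule eval_cong) (use Rel in auto)
  then show ?case by (simp only: sat.simps)
next
  case (Neg p)
  have "sat M s p = sat M s' p" by (rule Neg.IH) (use Neg.prems in auto)
  then show ?case by simp
next
  case (Conj p q)
  have "sat M s p = sat M s' p" by (rule Conj.IH(1)) (use Conj.prems in auto)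
  moreover have "sat M s q = sat M s' q" by (rule Conj.IH(2)) (use Conj.prems in auto)
  ultimately show ?case by simp
next
  case (Disj p q)
  have "sat M s p = sat M s' p" by (rule Disj.IH(1)) (use Disj.prems in auto)
  moreover have "sat M s q = sat M s' q" by (rule Disj.IH(2)) (use Disj.prems in auto)
  ultimately show ?case by simp
next
  case (Imp p q)
  have "sat M s p = sat M s' p" by (rule Imp.IH(1)) (use Imp.prems in auto)
  moreover have "sat M s q = sat M s' q" by (rule Imp.IH(2)) (use Imp.prems in auto)
  ultimately show ?case by simp
next
  case (Ex x p)
  have "\<And>a. sat M (s(x:=a)) p = sat M (s'(x:=a)) p" using Ex.IH Ex.prems by auto
  then show ?case by simp
next
  case (All x p)
  have "\<And>a. sat M (s(x:=a)) p = sat M (s'(x:=a)) p" using All.IH All.prems by auto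
  then show ?case by simp
qed auto

fun rename_trm :: "(nat \<Rightarrow> nat) \<Rightarrow> 'f trm \<Rightarrow> 'f trm" where
  "rename_trm \<rho> (Var n) = Var (\<rho> n)"
| "rename_trm \<rho> (Fn f ts) = Fn f (map (rename_trm \<rho>) ts)"

lemma eval_rename_trm: "eval M s (rename_trm \<rho> t) = eval M (s \<circ> \<rho>) t"
proof (induction t)
  case (Fn f ts)
  have "map (eval M s \<circ> rename_trm \<rho>) ts = map (eval M (s \<circ> \<rho>)) ts" using Fn by (auto simp: comp_def)
  then show ?case by (simp only: eval.simps rename_trm.simps map_map)
qed simp

lemma wft_rename_trm: "wft fa (rename_trm \<rho> t) = wft fa t"
  by (induction t) auto

text \<open>Only atomic formulas are renamed; the catch-all value Top is never used.\<close>

fun rename_atomic :: "(nat \<Rightarrow> nat) \<Rightarrow> ('f,'r) fm \<Rightarrow> ('f,'r) fm" where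
  "rename_atomic \<rho> (Eq t u) = Eq (rename_trm \<rho> t) (rename_trm \<rho> u)"
| "rename_atomic \<rho> (Rel r ts) = Rel r (map (rename_trm \<rho>) ts)"
| "rename_atomic \<rho> _ = Top"

lemma sat_rename_atomic: "atomic p \<Longrightarrow> sat M s (rename_atomic \<rho> p) = sat M (s \<circ> \<rho>) p"
proof (cases p)
  case (Rel r ts)
  have "map (eval M s \<circ> rename_trm \<rho>) ts = map (eval M (s \<circ> \<rho>)) ts" by (auto simp: eval_rename_trm)
  then show ?thesis using Rel by (simp only: sat.simps rename_atomic.simps map_map)
qed (auto simp: eval_rename_trm)

lemma wff_rename_atomic: "wff fa ra p \<Longrightarrow> wff fa ra (rename_atomic \<rho> p)"
  by (cases p) (auto simp: wft_rename_trm)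

lemma pos_qf_rename_atomic: "pos_qf (rename_atomic \<rho> p)"
  by (cases p) auto

fun Conjs :: "('f,'r) fm list \<Rightarrow> ('f,'r) fm" where
  "Conjs [] = Top"
| "Conjs (p # ps) = Conj p (Conjs ps)"

lemma sat_Conjs: "sat M s (Conjs ps) \<longleftrightarrow> (\<forall>p\<in>set ps. sat M s p)"
  by (induction ps) auto

lemma wff_Conjs: "wff fa ra (Conjs ps) \<longleftrightarrow> (\<forall>p\<in>set ps. wff fa ra p)"
  by (induction ps) auto

lemma pos_qf_Conjs: "(\<forall>p\<in>set ps. pos_qf p) \<Longrightarrow> pos_qf (Conjs ps)"
  by (induction ps) auto

lemma coherent_foldr_Ex: "pos_qf p \<Longrightarrow> coherent (foldr Ex xs p)"
  unfolding coherent_def by blast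

lemma wff_foldr_Ex: "wff fa ra (foldr Ex xs p) = wff fa ra p"
  by (induction xs) auto

lemma sat_foldr_Ex:
  "sat M \<tau> (foldr Ex xs p) \<longleftrightarrow>
     (\<exists>u. (\<forall>n. n \<notin> set xs \<longrightarrow> u n = \<tau> n) \<and> (\<forall>n\<in>set xs. u n \<in> dom M) \<and> sat M u p)"
proof (induction xs arbitrary: \<tau>)
  case Nil
  have "(\<forall>n. u n = \<tau> n) \<longleftrightarrow> u = \<tau>" for u :: "nat \<Rightarrow> 'a" by auto
  then show ?case by auto
next
  case (Cons x xs)
  show ?case
  proof
    assume "sat M \<tau> (foldr Ex (x # xs) p)"
    then obtain a where a: "a \<in> dom M" "sat M (\<tau>(x:=a)) (foldr Ex xs p)" by auto
    then obtain u where u: "\<forall>n. n \<notin> set xs \<longrightarrow> u n = (\<tau>(x:=a)) n" "\<forall>n\<in>set xs. u n \<in> dom M" "sat M u p"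
      using Cons.IH by blast
    have "\<forall>n\<in>set (x#xs). u n \<in> dom M"
    proof
      fix n assume "n \<in> set (x#xs)"
      then show "u n \<in> dom M" by (cases "n \<in> set xs") (use u a in auto)
    qed
    moreover have "\<forall>n. n \<notin> set (x#xs) \<longrightarrow> u n = \<tau> n" using u(1) by auto
    ultimately show "\<exists>u. (\<forall>n. n \<notin> set (x#xs) \<longrightarrow> u n = \<tau> n) \<and> (\<forall>n\<in>set (x#xs). u n \<in> dom M) \<and> sat M u p"
      using u(3) by blast
  next
    assume "\<exists>u. (\<forall>n. n \<notin> set (x#xs) \<longrightarrow> u n = \<tau> n) \<and> (\<forall>n\<in>set (x#xs). u n \<in> dom M) \<and> sat M u p"
    then obtain u where u: "\<forall>n. n \<notin> set (x#xs) \<longrightarrow> u n = \<tau> n" "\<forall>n\<in>set (x#xs). u n \<in> dom M" "sat M u p"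
      by blast
    then have "sat M (\<tau>(x := u x)) (foldr Ex xs p)"
      unfolding Cons.IH by (intro exI[of _ u]) auto
    then show "sat M \<tau> (foldr Ex (x # xs) p)" using u(2) by auto
  qed
qed

lemma hom_dom: "hom fa ra A B h \<Longrightarrow> a \<in> dom A \<Longrightarrow> h a \<in> dom B"
  unfolding hom_def by blast

lemma hom_comp:
  assumes "hom fa ra A B h" and "hom fa ra B C g"
  shows "hom fa ra A C (g \<circ> h)"
  unfolding hom_def
proof (intro conjI allI impI)
  show "(g \<circ> h) ` dom A \<subseteq> dom C" using assms unfolding hom_def by (auto simp: image_subset_iff)
next
  fix p s assume "wff fa ra p \<and> atomic p \<and> range s \<subseteq> dom A \<and> sat A s p"
  moreover have "range (h \<circ> s) \<subseteq> dom B" using calculation assms(1) unfolding hom_def by fastforce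
  ultimately show "sat C (g \<circ> h \<circ> s) p" using assms unfolding hom_def by (simp add: comp_assoc)
qed

lemma elementaryI:
  assumes "h ` dom A \<subseteq> dom B"
    and "\<And>p s. wff fa ra p \<Longrightarrow> range s \<subseteq> dom A \<Longrightarrow> sat A s p \<longleftrightarrow> sat B (h \<circ> s) p"
  shows "elementary fa ra A B h"
  using assms unfolding elementary_def hom_def by blast

lemma elementaryD:
  "elementary fa ra A B h \<Longrightarrow> wff fa ra p \<Longrightarrow> range s \<subseteq> dom A \<Longrightarrow> sat A s p \<longleftrightarrow> sat B (h \<circ> s) p"
  unfolding elementary_def by blast

lemma elementary_imp_hom: "elementary fa ra A B h \<Longrightarrow> hom fa ra A B h"
  unfolding elementary_def by blast

lemma is_model_if_elementary:
  assumes "is_theory fa ra T" and "is_model fa T B" and "is_struc fa A" and "elementary fa ra A B h"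
  shows "is_model fa T A"
  unfolding is_model_def
proof (intro conjI assms(3) ballI allI impI)
  fix p and s :: "nat \<Rightarrow> _" assume p: "p \<in> T" and s: "range s \<subseteq> dom A"
  have "wff fa ra p" using assms(1) p unfolding is_theory_def sentence_def by blast
  moreover have "range (h \<circ> s) \<subseteq> dom B"
    using s hom_dom[OF elementary_imp_hom[OF assms(4)]] by auto
  then have "sat B (h \<circ> s) p" using assms(2) p unfolding is_model_def by blast
  ultimately show "sat A s p" using elementaryD[OF assms(4)] s by blast
qed

lemma elementary_factor:
  assumes j: "elementary fa ra C B j" and img: "g ` dom A \<subseteq> j ` dom C"
  shows "\<forall>a\<in>dom A. inv_into (dom C) j (g a) \<in> dom C \<and> j (inv_into (dom C) j (g a)) = g a"
    and "hom fa ra A B g \<Longrightarrow> hom fa ra A C (inv_into (dom C) j \<circ> g)"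
    and "elementary fa ra A B g \<Longrightarrow> elementary fa ra A C (inv_into (dom C) j \<circ> g)"
proof -
  let ?g' = "inv_into (dom C) j \<circ> g"
  show g': "\<forall>a\<in>dom A. inv_into (dom C) j (g a) \<in> dom C \<and> j (inv_into (dom C) j (g a)) = g a"
    using img by (simp add: image_subset_iff inv_into_into f_inv_into_f)
  then have rng: "range (?g' \<circ> s) \<subseteq> dom C" and jg: "j \<circ> (?g' \<circ> s) = g \<circ> s"
    if "range s \<subseteq> dom A" for s :: "nat \<Rightarrow> _"
    using that by (auto simp: fun_eq_iff)
  have sat: "sat C (?g' \<circ> s) p \<longleftrightarrow> sat B (g \<circ> s) p" if "wff fa ra p" "range s \<subseteq> dom A" for p s
    using elementaryD[OF j that(1) rng[OF that(2)]] jg[OF that(2)] by simp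
  show "hom fa ra A C ?g'" if g: "hom fa ra A B g"
    unfolding hom_def
  proof (intro conjI allI impI)
    show "?g' ` dom A \<subseteq> dom C" using g' by auto
    fix p s assume "wff fa ra p \<and> atomic p \<and> range s \<subseteq> dom A \<and> sat A s p"
    then show "sat C (?g' \<circ> s) p" using g sat unfolding hom_def by blast
  qed
  show "elementary fa ra A C ?g'" if g: "elementary fa ra A B g"
  proof (rule elementaryI)
    show "?g' ` dom A \<subseteq> dom C" using g' by auto
    show "sat A s p \<longleftrightarrow> sat C (?g' \<circ> s) p" if "wff fa ra p" "range s \<subseteq> dom A" for p s
      using elementaryD[OF g that] sat[OF that] by simp
  qed
qed

section \<open>Coding syntax into \<open>nat + 'f + 'r\<close>\<close>

type_synonym ('f,'r) code = "nat + 'f + 'r"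

lemma infinite_code: "infinite (UNIV :: ('f,'r) code set)"
proof
  assume "finite (UNIV :: ('f,'r) code set)"
  then have "finite (range (Inl :: nat \<Rightarrow> ('f,'r) code))" by (rule finite_subset[rotated]) simp
  then show False using finite_imageD[of "Inl :: nat \<Rightarrow> ('f,'r) code" UNIV] by simp
qed

lemma ex_inj_code_pair: "\<exists>P :: ('f,'r) code \<times> ('f,'r) code \<Rightarrow> ('f,'r) code. inj P"
proof -
  from card_of_Times_same_infinite[OF infinite_code]
  obtain P where "bij_betw P ((UNIV :: ('f,'r) code set) \<times> (UNIV :: ('f,'r) code set)) (UNIV :: ('f,'r) code set)"
    using card_of_ordIso by blast
  then show ?thesis by (auto simp: bij_betw_def)
qed

definition pair_code :: "('f,'r) code \<Rightarrow> ('f,'r) code \<Rightarrow> ('f,'r) code" where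
  "pair_code a b = (SOME P. inj P) (a, b)"

lemma pair_code_eq [simp]: "pair_code a b = pair_code c d \<longleftrightarrow> a = c \<and> b = d"
proof -
  have "inj (SOME P :: ('f,'r) code \<times> ('f,'r) code \<Rightarrow> ('f,'r) code. inj P)"
    by (rule someI_ex[OF ex_inj_code_pair])
  then show ?thesis unfolding pair_code_def by (auto dest: injD)
qed

definition list_code :: "('f,'r) code list \<Rightarrow> ('f,'r) code" where
  "list_code xs = pair_code (Inl (length xs)) (foldr pair_code xs (Inl 0))"

lemma list_code_eq [simp]: "list_code xs = list_code ys \<longleftrightarrow> xs = ys"
proof -
  have "length xs = length ys \<Longrightarrow> foldr pair_code xs z = foldr pair_code ys z \<Longrightarrow> xs = ys" for z
    by (induction xs ys rule: list_induct2) auto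
  then show ?thesis unfolding list_code_def by auto
qed

lemma map_eq_map_imp_eq:
  "(\<forall>t\<in>set ts. \<forall>t'. f t = f t' \<longrightarrow> t = t') \<Longrightarrow> map f ts = map f ts' \<Longrightarrow> ts = ts'"
proof (induction ts arbitrary: ts')
  case (Cons a ts) then show ?case by (cases ts') auto
qed simp

fun trm_code :: "'f trm \<Rightarrow> ('f,'r) code" where
  "trm_code (Var n) = pair_code (Inl 0) (Inl n)"
| "trm_code (Fn f ts) = pair_code (Inl 1) (pair_code (Inr (Inl f)) (list_code (map trm_code ts)))"

lemma trm_code_inj: "(trm_code t :: ('f,'r) code) = trm_code t' \<Longrightarrow> t = t'"
proof (induction t arbitrary: t')
  case (Var n) then show ?case by (cases t') auto
next
  case (Fn f ts)
  show ?case
  proof (cases t')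
    case (Fn g us)
    with Fn.prems have fg: "f = g" and map: "map (trm_code :: 'f trm \<Rightarrow> ('f,'r) code) ts = map trm_code us"
      by auto
    have "\<forall>t\<in>set ts. \<forall>t'. (trm_code t :: ('f,'r) code) = trm_code t' \<longrightarrow> t = t'" using Fn.IH by blast
    then have "ts = us" using map by (rule map_eq_map_imp_eq)
    then show ?thesis using Fn fg by simp
  qed (use Fn.prems in simp)
qed

lemma map_trm_code_inj:
  assumes "map (trm_code :: 'f trm \<Rightarrow> ('f,'r) code) ts = map trm_code us"
  shows "ts = us"
  using _ assms by (rule map_eq_map_imp_eq) (blast intro: trm_code_inj)

fun fm_code :: "('f,'r) fm \<Rightarrow> ('f,'r) code" where
  "fm_code Bot = pair_code (Inl 0) (Inl 0)"
| "fm_code Top = pair_code (Inl 1) (Inl 0)"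
| "fm_code (Eq t u) = pair_code (Inl 2) (pair_code (trm_code t) (trm_code u))"
| "fm_code (Rel r ts) = pair_code (Inl 3) (pair_code (Inr (Inr r)) (list_code (map trm_code ts)))"
| "fm_code (Neg p) = pair_code (Inl 4) (fm_code p)"
| "fm_code (Conj p q) = pair_code (Inl 5) (pair_code (fm_code p) (fm_code q))"
| "fm_code (Disj p q) = pair_code (Inl 6) (pair_code (fm_code p) (fm_code q))"
| "fm_code (Imp p q) = pair_code (Inl 7) (pair_code (fm_code p) (fm_code q))"
| "fm_code (Ex x p) = pair_code (Inl 8) (pair_code (Inl x) (fm_code p))"
| "fm_code (All x p) = pair_code (Inl 9) (pair_code (Inl x) (fm_code p))"

lemma fm_code_inj: "fm_code p = fm_code q \<Longrightarrow> p = q"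
proof (induction p arbitrary: q)
  case (Eq t u) then show ?case by (cases q) (auto dest: trm_code_inj)
next
  case (Rel r ts) then show ?case by (cases q) (auto dest: map_trm_code_inj)
next
  case Bot then show ?case by (cases q) auto
next
  case Top then show ?case by (cases q) auto
next
  case (Neg p) then show ?case by (cases q) auto
next
  case (Conj p1 p2) then show ?case by (cases q) auto
next
  case (Disj p1 p2) then show ?case by (cases q) auto
next
  case (Imp p1 p2) then show ?case by (cases q) auto
next
  case (Ex x p) then show ?case by (cases q) auto
next
  case (All x p) then show ?case by (cases q) auto
qed

section \<open>Downward Loewenheim-Skolem\<close>

lemma eval_embedding:
  assumes M': "is_struc fa M'"
    and fint: "\<And>f xs. length xs = fa f \<Longrightarrow> set xs \<subseteq> dom M' \<Longrightarrow> j (fint M' f xs) = fint M f (map j xs)"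
    and t: "wft fa t" and s: "range s \<subseteq> dom M'"
  shows "eval M' s t \<in> dom M' \<and> j (eval M' s t) = eval M (j \<circ> s) t"
  using t
proof (induction t)
  case (Var n) then show ?case using s by auto
next
  case (Fn f ts)
  then have ih: "eval M' s t \<in> dom M' \<and> j (eval M' s t) = eval M (j \<circ> s) t" if "t \<in> set ts" for t
    using that by (auto simp: comp_def)
  let ?xs = "map (eval M' s) ts"
  have xs: "set ?xs \<subseteq> dom M'" "map j ?xs = map (eval M (j \<circ> s)) ts" using ih by auto
  have "length ?xs = fa f" using Fn.prems by simp
  then have "fint M' f ?xs \<in> dom M'" "j (fint M' f ?xs) = fint M f (map j ?xs)"
    using M' xs(1) fint unfolding is_struc_def by auto
  then show ?case unfolding eval.simps xs(2)[symmetric] by blast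
qed

lemma tarski_vaught_test:
  assumes M': "is_struc fa M'" and img: "j ` dom M' \<subseteq> dom M" and inj: "inj_on j (dom M')"
    and fint: "\<And>f xs. length xs = fa f \<Longrightarrow> set xs \<subseteq> dom M' \<Longrightarrow> j (fint M' f xs) = fint M f (map j xs)"
    and rint: "\<And>r xs. set xs \<subseteq> dom M' \<Longrightarrow> rint M' r xs = rint M r (map j xs)"
    and witness: "\<And>s x p a. range s \<subseteq> dom M' \<Longrightarrow> a \<in> dom M \<Longrightarrow> sat M ((j \<circ> s)(x := a)) p \<Longrightarrow>
      \<exists>b\<in>dom M'. sat M ((j \<circ> s)(x := j b)) p"
  shows "elementary fa ra M' M j"
proof -
  note eval = eval_embedding[OF M' fint]
  have "sat M' s p \<longleftrightarrow> sat M (j \<circ> s) p" if "wff fa ra p" "range s \<subseteq> dom M'" for p s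
    using that
  proof (induction p arbitrary: s)
    case (Eq t u)
    then have t: "eval M' s t \<in> dom M'" "j (eval M' s t) = eval M (j \<circ> s) t"
      and u: "eval M' s u \<in> dom M'" "j (eval M' s u) = eval M (j \<circ> s) u"
      using eval by auto
    have "eval M' s t = eval M' s u \<longleftrightarrow> j (eval M' s t) = j (eval M' s u)"
      using inj t(1) u(1) by (auto dest: inj_onD)
    then show ?case unfolding sat.simps t(2) u(2) .
  next
    case (Rel r ts)
    then have "set (map (eval M' s) ts) \<subseteq> dom M'" "map j (map (eval M' s) ts) = map (eval M (j \<circ> s)) ts"
      using eval by auto
    then show ?case using rint by (simp only: sat.simps)
  next
    case (Ex x p)
    have upd: "j \<circ> s(x := b) = (j \<circ> s)(x := j b)" for b by auto
    have ih: "sat M' (s(x := b)) p \<longleftrightarrow> sat M ((j \<circ> s)(x := j b)) p" if "b \<in> dom M'" for b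
      using Ex that unfolding upd[symmetric] by (intro Ex.IH) auto
    show ?case
    proof
      assume "sat M' s (Ex x p)"
      then show "sat M (j \<circ> s) (Ex x p)" using ih img by auto
    next
      assume "sat M (j \<circ> s) (Ex x p)"
      then obtain a where "a \<in> dom M" "sat M ((j \<circ> s)(x := a)) p" by auto
      then obtain b where "b \<in> dom M'" "sat M ((j \<circ> s)(x := j b)) p" using witness[OF Ex.prems(2)] by blast
      then show "sat M' s (Ex x p)" using ih by auto
    qed
  next
    case (All x p)
    have upd: "j \<circ> s(x := b) = (j \<circ> s)(x := j b)" for b by auto
    have ih: "sat M' (s(x := b)) p \<longleftrightarrow> sat M ((j \<circ> s)(x := j b)) p" if "b \<in> dom M'" for b
      using All that unfolding upd[symmetric] by (intro All.IH) auto
    show ?case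
    proof
      assume all: "sat M' s (All x p)"
      show "sat M (j \<circ> s) (All x p)"
      proof (rule ccontr)
        assume "\<not> sat M (j \<circ> s) (All x p)"
        then obtain a where "a \<in> dom M" "sat M ((j \<circ> s)(x := a)) (Neg p)" by auto
        then obtain b where "b \<in> dom M'" "sat M ((j \<circ> s)(x := j b)) (Neg p)"
          using witness[OF All.prems(2)] by blast
        then show False using all ih by auto
      qed
    next
      assume "sat M (j \<circ> s) (All x p)"
      then show "sat M' s (All x p)" using ih img by auto
    qed
  qed auto
  then show ?thesis using img by (intro elementaryI) auto
qed

datatype ('f,'r) sk_trm =
    Param "bool \<times> ('f,'r) code"
  | SFn 'f "('f,'r) sk_trm list"
  | Skolem "('f,'r) fm" nat "('f,'r) sk_trm list"

fun sk_trm_code :: "('f,'r) sk_trm \<Rightarrow> ('f,'r) code" where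
  "sk_trm_code (Param (b, k)) = pair_code (Inl 0) (pair_code (Inl (if b then 1 else 0)) k)"
| "sk_trm_code (SFn f ts) = pair_code (Inl 1) (pair_code (Inr (Inl f)) (list_code (map sk_trm_code ts)))"
| "sk_trm_code (Skolem p x ts) =
     pair_code (Inl 2) (pair_code (fm_code p) (pair_code (Inl x) (list_code (map sk_trm_code ts))))"

lemma sk_trm_code_inj: "sk_trm_code t = sk_trm_code t' \<Longrightarrow> t = t'"
proof (induction t arbitrary: t')
  case (Param bk) then show ?case by (cases bk; cases t') (auto split: if_splits)
next
  case (SFn f ts)
  show ?case
  proof (cases t')
    case (SFn g us)
    with SFn.prems have "f = g" and map: "map sk_trm_code ts = map sk_trm_code us" by auto
    moreover have "ts = us" using _ map by (rule map_eq_map_imp_eq) (use SFn.IH in blast)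
    ultimately show ?thesis using SFn by simp
  qed (use SFn.prems in auto)
next
  case (Skolem p x ts)
  show ?case
  proof (cases t')
    case (Skolem q y us)
    with Skolem.prems have "p = q" "x = y" and map: "map sk_trm_code ts = map sk_trm_code us"
      by (auto dest: fm_code_inj)
    moreover have "ts = us" using _ map by (rule map_eq_map_imp_eq) (use Skolem.IH in blast)
    ultimately show ?thesis using Skolem by simp
  qed (use Skolem.prems in auto)
qed

definition some_elem :: "('m,'f,'r) struc \<Rightarrow> 'm" where
  "some_elem M = (SOME a. a \<in> dom M)"

lemma some_elem_dom: "is_struc fa M \<Longrightarrow> some_elem M \<in> dom M"
  unfolding some_elem_def is_struc_def by (auto intro: someI_ex)

text \<open>The junk value some_elem M stands for a missing witness and for variables beyond the
length of vs.\<close>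

definition skolem :: "('m,'f,'r) struc \<Rightarrow> ('f,'r) fm \<Rightarrow> nat \<Rightarrow> 'm list \<Rightarrow> 'm" where
  "skolem M p x vs = (let \<sigma> = (\<lambda>n. if n < length vs then vs!n else some_elem M) in
     if \<exists>a\<in>dom M. sat M (\<sigma>(x:=a)) p then SOME a. a\<in>dom M \<and> sat M (\<sigma>(x:=a)) p else some_elem M)"

fun sk_eval :: "('f \<Rightarrow> nat) \<Rightarrow> ('m,'f,'r) struc \<Rightarrow> (bool \<times> ('f,'r) code \<Rightarrow> 'm) \<Rightarrow> ('f,'r) sk_trm \<Rightarrow> 'm" where
  "sk_eval fa M L (Param b) = L b"
| "sk_eval fa M L (SFn f ts) = (if length ts = fa f then fint M f (map (sk_eval fa M L) ts) else some_elem M)"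
| "sk_eval fa M L (Skolem p x ts) = skolem M p x (map (sk_eval fa M L) ts)"

lemma sk_eval_dom:
  assumes "is_struc fa M" "range L \<subseteq> dom M"
  shows "sk_eval fa M L t \<in> dom M"
proof (induction t)
  case (Param b) then show ?case using assms by auto
next
  case (SFn f ts)
  then have "set (map (sk_eval fa M L) ts) \<subseteq> dom M" by auto
  then show ?case using assms some_elem_dom[OF assms(1)] unfolding is_struc_def by auto
next
  case (Skolem p x ts)
  show ?case unfolding sk_eval.simps skolem_def Let_def using some_elem_dom[OF assms(1)]
    by (auto intro: someI2_ex)
qed

lemma sk_eval_inv_list:
  assumes "set xs \<subseteq> range (sk_eval fa M L)"
  shows "map (sk_eval fa M L) (map (\<lambda>x. SOME t. sk_eval fa M L t = x) xs) = xs"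
  using assms by (induction xs) (auto intro: someI_ex)

lemma skolem_hull_fint_closed:
  assumes "set xs \<subseteq> range (sk_eval fa M L)" "length xs = fa f"
  shows "fint M f xs \<in> range (sk_eval fa M L)"
proof -
  let ?ts = "map (\<lambda>x. SOME t. sk_eval fa M L t = x) xs"
  have "sk_eval fa M L (SFn f ?ts) = fint M f xs"
    using sk_eval_inv_list[OF assms(1)] assms(2) by simp
  then show ?thesis by (metis rangeI)
qed

lemma skolem_hull_witness:
  assumes "range s \<subseteq> range (sk_eval fa M L)" "a \<in> dom M" "sat M (s(x:=a)) q"
  shows "\<exists>b\<in>range (sk_eval fa M L). sat M (s(x:=b)) q"
proof -
  obtain n0 where n0: "\<forall>n\<in>fv q. n < n0"
    using finite_fv[of q] finite_nat_set_iff_bounded by blast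
  let ?xs = "map s [0..<n0]"
  let ?ts = "map (\<lambda>x. SOME t. sk_eval fa M L t = x) ?xs"
  have vs: "map (sk_eval fa M L) ?ts = ?xs" using assms(1) by (intro sk_eval_inv_list) auto
  define \<sigma> where "\<sigma> = (\<lambda>n. if n < length ?xs then ?xs!n else some_elem M)"
  have agree: "\<And>c. sat M (\<sigma>(x:=c)) q = sat M (s(x:=c)) q"
    by (rule sat_cong) (use n0 in \<open>auto simp: \<sigma>_def\<close>)
  have ex: "\<exists>a\<in>dom M. sat M (\<sigma>(x:=a)) q" using assms(2,3) agree by auto
  let ?b = "sk_eval fa M L (Skolem q x ?ts)"
  have "?b = (SOME a. a\<in>dom M \<and> sat M (\<sigma>(x:=a)) q)"
    using ex unfolding sk_eval.simps vs skolem_def Let_def \<sigma>_def by simp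
  then have "sat M (\<sigma>(x:=?b)) q" using ex by (auto intro: someI2_ex)
  then show ?thesis using agree by (metis rangeI)
qed

definition hull_code :: "('f \<Rightarrow> nat) \<Rightarrow> ('m,'f,'r) struc \<Rightarrow> (bool \<times> ('f,'r) code \<Rightarrow> 'm) \<Rightarrow> 'm \<Rightarrow> ('f,'r) code" where
  "hull_code fa M L x = sk_trm_code (SOME t. sk_eval fa M L t = x)"

lemma inj_on_hull_code: "inj_on (hull_code fa M L) (range (sk_eval fa M L))"
proof (rule inj_onI)
  fix x y assume "x \<in> range (sk_eval fa M L)" "y \<in> range (sk_eval fa M L)"
    and "hull_code fa M L x = hull_code fa M L y"
  then have "(SOME t. sk_eval fa M L t = x) = (SOME t. sk_eval fa M L t = y)"
    unfolding hull_code_def using sk_trm_code_inj by blast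
  moreover have "sk_eval fa M L (SOME t. sk_eval fa M L t = x) = x" "sk_eval fa M L (SOME t. sk_eval fa M L t = y) = y"
    using \<open>x \<in> _\<close> \<open>y \<in> _\<close> by (auto intro: someI_ex)
  ultimately show "x = y" by metis
qed

text \<open>Parameters come in two copies of the code type, enough for both sides of a homomorphism
between code-carried structures.\<close>

lemma downward_LS:
  fixes M :: "('m,'f,'r) struc" and L :: "bool \<times> ('f,'r) code \<Rightarrow> 'm"
  assumes M: "is_struc fa M" and L: "range L \<subseteq> dom M"
  obtains M' :: "(('f,'r) code,'f,'r) struc" and j
  where "is_struc fa M'" "elementary fa ra M' M j" "range L \<subseteq> j ` dom M'"
proof -
  define H where "H = range (sk_eval fa M L)"
  define e where "e = hull_code fa M L"
  define j where "j = inv_into H e"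
  have je: "x \<in> H \<Longrightarrow> j (e x) = x" for x
    unfolding j_def e_def H_def by (rule inv_into_f_f[OF inj_on_hull_code])
  have jH: "j ` e ` H = H"
    unfolding image_image using je by (simp cong: image_cong)
  have HM: "H \<subseteq> dom M" unfolding H_def using sk_eval_dom[OF M L] by auto
  have clos: "set xs \<subseteq> H \<Longrightarrow> length xs = fa f \<Longrightarrow> fint M f xs \<in> H" for f xs
    unfolding H_def by (rule skolem_hull_fint_closed)
  define M' :: "(('f,'r) code,'f,'r) struc" where
    "M' = \<lparr>dom = e ` H, fint = (\<lambda>f xs. e (fint M f (map j xs))), rint = (\<lambda>r xs. rint M r (map j xs))\<rparr>"
  have dom: "dom M' = e ` H" by (simp add: M'_def)
  have jdom: "j ` dom M' = H" unfolding dom jH ..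
  have fint: "length xs = fa f \<Longrightarrow> set xs \<subseteq> dom M' \<Longrightarrow> fint M f (map j xs) \<in> H" for f xs
    using clos[of "map j xs" f] image_mono[of "set xs" "dom M'" j] unfolding jdom by simp
  have struc: "is_struc fa M'"
    unfolding is_struc_def
  proof (intro conjI allI impI)
    show "dom M' \<noteq> {}" unfolding dom H_def by simp
    fix f xs assume "length xs = fa f \<and> set xs \<subseteq> dom M'"
    then show "fint M' f xs \<in> dom M'" using fint unfolding dom by (simp add: M'_def)
  qed
  have "elementary fa ra M' M j"
  proof (rule tarski_vaught_test[OF struc])
    show "j ` dom M' \<subseteq> dom M" unfolding jdom by (rule HM)
    show "inj_on j (dom M')" unfolding dom j_def by (rule inj_on_inv_into) simp
    show "j (fint M' f xs) = fint M f (map j xs)" if "length xs = fa f" "set xs \<subseteq> dom M'" for f xs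
      using je[OF fint[OF that]] by (simp add: M'_def)
    show "rint M' r xs = rint M r (map j xs)" for r xs by (simp add: M'_def)
  next
    fix s x p a assume s: "range s \<subseteq> dom M'" and a: "a \<in> dom M" "sat M ((j \<circ> s)(x := a)) p"
    have "range (j \<circ> s) \<subseteq> H"
      using image_mono[OF s, of j] unfolding jdom by (simp add: image_comp)
    then have "\<exists>b\<in>H. sat M ((j \<circ> s)(x := b)) p"
      using a unfolding H_def by (rule skolem_hull_witness)
    then obtain b where b: "b \<in> H" "sat M ((j \<circ> s)(x := b)) p" ..
    then have "e b \<in> dom M'" "sat M ((j \<circ> s)(x := j (e b))) p" unfolding dom using je[OF b(1)] by simp_all
    then show "\<exists>b\<in>dom M'. sat M ((j \<circ> s)(x := j b)) p" by blast
  qed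
  moreover have "range L \<subseteq> j ` dom M'"
  proof -
    have "L b \<in> H" for b unfolding H_def by (rule range_eqI[of _ _ "Param b"]) simp
    then show ?thesis unfolding jdom by auto
  qed
  ultimately show thesis using struc that by blast
qed

section \<open>Ultraproducts\<close>

definition proper_filter :: "'i set set \<Rightarrow> bool" where
  "proper_filter U \<longleftrightarrow> UNIV \<in> U \<and> {} \<notin> U \<and> (\<forall>A B. A \<in> U \<and> B \<in> U \<longrightarrow> A \<inter> B \<in> U)
     \<and> (\<forall>A B. A \<in> U \<and> A \<subseteq> B \<longrightarrow> B \<in> U)"

definition ultrafilter :: "'i set set \<Rightarrow> bool" where
  "ultrafilter U \<longleftrightarrow> UNIV \<in> U \<and> {} \<notin> U \<and> (\<forall>A B. A \<in> U \<and> B \<in> U \<longrightarrow> A \<inter> B \<in> U)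
     \<and> (\<forall>A B. A \<in> U \<and> A \<subseteq> B \<longrightarrow> B \<in> U) \<and> (\<forall>A. A \<in> U \<or> - A \<in> U)"

lemma filterD:
  assumes "proper_filter U"
  shows "UNIV \<in> U" "{} \<notin> U" "A \<in> U \<Longrightarrow> B \<in> U \<Longrightarrow> A \<inter> B \<in> U"
    "A \<in> U \<Longrightarrow> A \<subseteq> B \<Longrightarrow> B \<in> U"
  using assms unfolding proper_filter_def by blast+

lemma filterI:
  assumes "UNIV \<in> U" "{} \<notin> U" "\<And>A B. A \<in> U \<Longrightarrow> B \<in> U \<Longrightarrow> A \<inter> B \<in> U"
    "\<And>A B. A \<in> U \<Longrightarrow> A \<subseteq> B \<Longrightarrow> B \<in> U"
  shows "proper_filter U"
  using assms unfolding proper_filter_def by blast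

lemma proper_filter_Union_chain:
  assumes "C \<noteq> {}" and filters: "\<And>X. X \<in> C \<Longrightarrow> proper_filter X"
    and chain: "\<And>X Y. X \<in> C \<Longrightarrow> Y \<in> C \<Longrightarrow> X \<subseteq> Y \<or> Y \<subseteq> X"
  shows "proper_filter (\<Union>C)"
proof (rule filterI)
  show "UNIV \<in> \<Union>C" using assms(1) filters filterD(1) by blast
  show "{} \<notin> \<Union>C" using filters filterD(2) by blast
next
  fix A B assume "A \<in> \<Union>C" "B \<in> \<Union>C"
  then obtain X Y where XY: "X \<in> C" "Y \<in> C" "A \<in> X" "B \<in> Y" by auto
  show "A \<inter> B \<in> \<Union>C"
  proof (cases "X \<subseteq> Y")
    case True
    then have "A \<inter> B \<in> Y" using XY filters filterD(3) by (metis subsetD)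
    then show ?thesis using XY by auto
  next
    case False then have "Y \<subseteq> X" using chain XY by blast
    then have "A \<inter> B \<in> X" using XY filters filterD(3) by (metis subsetD)
    then show ?thesis using XY by auto
  qed
next
  fix A B assume "A \<in> \<Union>C" "A \<subseteq> B"
  then obtain X where "X \<in> C" "A \<in> X" by auto
  then have "B \<in> X" using filters filterD(4) \<open>A \<subseteq> B\<close> by metis
  then show "B \<in> \<Union>C" using \<open>X \<in> C\<close> by auto
qed

lemma ultrafilter_if_maximal:
  assumes U: "proper_filter U" and max: "\<And>X. proper_filter X \<Longrightarrow> U \<subseteq> X \<Longrightarrow> X = U"
  shows "ultrafilter U"
proof -
  have "A \<in> U \<or> - A \<in> U" for A
  proof (cases "\<exists>Z\<in>U. Z \<inter> A = {}")
    case True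
    then obtain Z where "Z \<in> U" "Z \<subseteq> - A" by auto
    then show ?thesis using filterD(4)[OF U] by metis
  next
    case False
    let ?G = "{Y. \<exists>Z\<in>U. Z \<inter> A \<subseteq> Y}"
    have "proper_filter ?G"
    proof (rule filterI)
      show "UNIV \<in> ?G" using filterD(1)[OF U] by auto
      show "{} \<notin> ?G" using False by auto
    next
      fix X Y assume "X \<in> ?G" "Y \<in> ?G"
      then obtain Z1 Z2 where Z: "Z1 \<in> U" "Z2 \<in> U" "Z1 \<inter> A \<subseteq> X" "Z2 \<inter> A \<subseteq> Y" by auto
      then have "Z1 \<inter> Z2 \<in> U" using filterD(3)[OF U] by metis
      moreover have "(Z1 \<inter> Z2) \<inter> A \<subseteq> X \<inter> Y" using Z by auto
      ultimately show "X \<inter> Y \<in> ?G" by blast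
    next
      fix X Y assume "X \<in> ?G" "X \<subseteq> Y"
      then show "Y \<in> ?G" by blast
    qed
    moreover have "U \<subseteq> ?G" by blast
    ultimately have "?G = U" using max by blast
    moreover have "A \<in> ?G" using filterD(1)[OF U] by auto
    ultimately show ?thesis by auto
  qed
  then show ?thesis unfolding ultrafilter_def using filterD[OF U] by blast
qed

lemma ultrafilter_exists:
  assumes "proper_filter F"
  shows "\<exists>U. ultrafilter U \<and> F \<subseteq> U"
proof -
  let ?A = "{G. proper_filter G \<and> F \<subseteq> G}"
  have "\<exists>M\<in>?A. \<forall>X\<in>?A. M \<subseteq> X \<longrightarrow> X = M"
  proof (rule Zorn_Lemma2, intro ballI)
    fix C assume C: "C \<in> chains ?A"
    show "\<exists>U\<in>?A. \<forall>X\<in>C. X \<subseteq> U"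
    proof (cases "C = {}")
      case True then show ?thesis using assms by auto
    next
      case False
      have "proper_filter (\<Union>C)"
        by (rule proper_filter_Union_chain[OF False]) (use C in \<open>auto simp: chains_def chain_subset_def\<close>)
      moreover have "F \<subseteq> \<Union>C" using False C by (auto simp: chains_def)
      ultimately show ?thesis by auto
    qed
  qed
  then obtain U where U: "proper_filter U" "F \<subseteq> U"
    and max: "\<And>X. proper_filter X \<Longrightarrow> F \<subseteq> X \<Longrightarrow> U \<subseteq> X \<Longrightarrow> X = U"
    by auto
  have "ultrafilter U" by (rule ultrafilter_if_maximal[OF U(1)]) (use max U(2) in blast)
  then show ?thesis using U(2) by blast
qed

lemma ultrafilterD:
  assumes "ultrafilter U"
  shows "UNIV \<in> U" "{} \<notin> U" "A \<in> U \<Longrightarrow> B \<in> U \<Longrightarrow> A \<inter> B \<in> U"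
    "A \<in> U \<Longrightarrow> A \<subseteq> B \<Longrightarrow> B \<in> U" "A \<in> U \<or> - A \<in> U"
  using assms unfolding ultrafilter_def by blast+

lemma ultra_conj: "ultrafilter U \<Longrightarrow> {i. P i \<and> Q i} \<in> U \<longleftrightarrow> {i. P i} \<in> U \<and> {i. Q i} \<in> U"
proof -
  assume u: "ultrafilter U"
  have e: "{i. P i \<and> Q i} = {i. P i} \<inter> {i. Q i}" by auto
  show ?thesis unfolding e using ultrafilterD[OF u] by (meson inf_le1 inf_le2)
qed

lemma ultra_neg: "ultrafilter U \<Longrightarrow> {i. \<not> P i} \<in> U \<longleftrightarrow> {i. P i} \<notin> U"
proof -
  assume u: "ultrafilter U"
  have e: "{i. \<not> P i} = - {i. P i}" by auto
  have "\<not> ({i. P i} \<in> U \<and> - {i. P i} \<in> U)"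
  proof
    assume "{i. P i} \<in> U \<and> - {i. P i} \<in> U"
    then have "{i. P i} \<inter> - {i. P i} \<in> U" using ultrafilterD(3)[OF u] by blast
    then show False using ultrafilterD(2)[OF u] by simp
  qed
  then show ?thesis unfolding e using ultrafilterD(5)[OF u] by blast
qed

lemma ultra_disj: "ultrafilter U \<Longrightarrow> {i. P i \<or> Q i} \<in> U \<longleftrightarrow> {i. P i} \<in> U \<or> {i. Q i} \<in> U"
proof -
  assume u: "ultrafilter U"
  have "{i. P i \<or> Q i} \<in> U \<longleftrightarrow> {i. \<not> (\<not> P i \<and> \<not> Q i)} \<in> U" by simp
  also have "\<dots> \<longleftrightarrow> \<not> ({i. \<not> P i} \<in> U \<and> {i. \<not> Q i} \<in> U)"
    using ultra_neg[OF u, of "\<lambda>i. \<not> P i \<and> \<not> Q i"] ultra_conj[OF u] by simp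
  also have "\<dots> \<longleftrightarrow> {i. P i} \<in> U \<or> {i. Q i} \<in> U" using ultra_neg[OF u] by simp
  finally show ?thesis .
qed

lemma ultra_imp: "ultrafilter U \<Longrightarrow> {i. P i \<longrightarrow> Q i} \<in> U \<longleftrightarrow> ({i. P i} \<in> U \<longrightarrow> {i. Q i} \<in> U)"
proof -
  assume u: "ultrafilter U"
  have "{i. P i \<longrightarrow> Q i} \<in> U \<longleftrightarrow> {i. \<not> P i \<or> Q i} \<in> U" by simp
  also have "\<dots> \<longleftrightarrow> {i. \<not> P i} \<in> U \<or> {i. Q i} \<in> U" by (rule ultra_disj[OF u])
  finally show ?thesis using ultra_neg[OF u] by auto
qed

lemma ultra_const: "ultrafilter U \<Longrightarrow> {i. P} \<in> U \<longleftrightarrow> P"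
  using ultrafilterD(1,2) by (cases P) auto

lemma ultra_cong: "ultrafilter U \<Longrightarrow> W \<in> U \<Longrightarrow> (\<And>i. i \<in> W \<Longrightarrow> P i \<longleftrightarrow> Q i) \<Longrightarrow> {i. P i} \<in> U \<longleftrightarrow> {i. Q i} \<in> U"
proof -
  assume u: "ultrafilter U" and W: "W \<in> U" and e: "\<And>i. i \<in> W \<Longrightarrow> P i \<longleftrightarrow> Q i"
  have a: "W \<inter> {i. P i} \<subseteq> {i. Q i}" "W \<inter> {i. Q i} \<subseteq> {i. P i}" using e by auto
  show ?thesis using ultrafilterD(3,4)[OF u] W a by meson
qed

lemma ultra_list_all: "ultrafilter U \<Longrightarrow> (\<And>x. x \<in> set xs \<Longrightarrow> {i. P x i} \<in> U) \<Longrightarrow> {i. \<forall>x\<in>set xs. P x i} \<in> U"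
proof (induction xs)
  case Nil then show ?case using ultrafilterD(1)[OF Nil(1)] by simp
next
  case (Cons a xs)
  have "{i. P a i \<and> (\<forall>x\<in>set xs. P x i)} \<in> U"
    using Cons ultra_conj[OF Cons(2)] by auto
  then show ?case by simp
qed

definition uclass :: "'i set set \<Rightarrow> ('i \<Rightarrow> 'm) \<Rightarrow> ('i \<Rightarrow> 'm) set" where
  "uclass U f = {f'. {i. f i = f' i} \<in> U}"

definition urep :: "('i \<Rightarrow> 'm) set \<Rightarrow> 'i \<Rightarrow> 'm" where
  "urep c = (SOME f. f \<in> c)"

lemma uclass_eq: "ultrafilter U \<Longrightarrow> uclass U f = uclass U f' \<longleftrightarrow> {i. f i = f' i} \<in> U"
proof
  assume u: "ultrafilter U" and e: "uclass U f = uclass U f'"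
  have "f' \<in> uclass U f'" unfolding uclass_def using ultrafilterD(1)[OF u] by simp
  then have "f' \<in> uclass U f" using e by simp
  then show "{i. f i = f' i} \<in> U" unfolding uclass_def by simp
next
  assume u: "ultrafilter U" and e: "{i. f i = f' i} \<in> U"
  show "uclass U f = uclass U f'"
  proof (rule set_eqI)
    fix g
    have "{i. f i = g i} \<in> U \<longleftrightarrow> {i. f' i = g i} \<in> U"
      by (rule ultra_cong[OF u e]) auto
    then show "g \<in> uclass U f \<longleftrightarrow> g \<in> uclass U f'" unfolding uclass_def by simp
  qed
qed

lemma urep_uclass: "ultrafilter U \<Longrightarrow> {i. urep (uclass U f) i = f i} \<in> U"
proof -
  assume u: "ultrafilter U"
  have "f \<in> uclass U f" unfolding uclass_def using ultrafilterD(1)[OF u] by simp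
  then have "urep (uclass U f) \<in> uclass U f" unfolding urep_def by (rule someI[where P="\<lambda>g. g \<in> uclass U f"])
  then have "{i. f i = urep (uclass U f) i} \<in> U" unfolding uclass_def by simp
  moreover have "{i. f i = urep (uclass U f) i} = {i. urep (uclass U f) i = f i}" by auto
  ultimately show ?thesis by simp
qed

definition ultraprod :: "'i set set \<Rightarrow> ('m,'f,'r) struc \<Rightarrow> (('i \<Rightarrow> 'm) set, 'f, 'r) struc" where
  "ultraprod U M = \<lparr>dom = {uclass U f | f. \<forall>i. f i \<in> dom M},
     fint = (\<lambda>f cs. uclass U (\<lambda>i. fint M f (map (\<lambda>c. urep c i) cs))),
     rint = (\<lambda>r cs. {i. rint M r (map (\<lambda>c. urep c i) cs)} \<in> U)\<rparr>"

lemma ultraprod_simps: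
  "dom (ultraprod U M) = {uclass U f | f. \<forall>i. f i \<in> dom M}"
  "fint (ultraprod U M) f cs = uclass U (\<lambda>i. fint M f (map (\<lambda>c. urep c i) cs))"
  "rint (ultraprod U M) r cs = ({i. rint M r (map (\<lambda>c. urep c i) cs)} \<in> U)"
  by (simp_all add: ultraprod_def)

lemma eval_ultraprod:
  assumes u: "ultrafilter U"
  shows "eval (ultraprod U M) (\<lambda>n. uclass U (\<sigma> n)) t = uclass U (\<lambda>i. eval M (\<lambda>n. \<sigma> n i) t)"
proof (induction t)
  case (Var n) then show ?case by simp
next
  case (Fn f ts)
  define E where "E t = (\<lambda>i. eval M (\<lambda>n. \<sigma> n i) t)" for t
  have "map (eval (ultraprod U M) (\<lambda>n. uclass U (\<sigma> n))) ts = map (\<lambda>t. uclass U (E t)) ts"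
    using Fn unfolding E_def by auto
  then have l0: "eval (ultraprod U M) (\<lambda>n. uclass U (\<sigma> n)) (Fn f ts) = fint (ultraprod U M) f (map (\<lambda>t. uclass U (E t)) ts)"
    by (simp only: eval.simps)
  have l: "eval (ultraprod U M) (\<lambda>n. uclass U (\<sigma> n)) (Fn f ts) =
      uclass U (\<lambda>i. fint M f (map (\<lambda>t. urep (uclass U (E t)) i) ts))"
    unfolding l0 ultraprod_simps map_map comp_def ..
  have W: "{i. \<forall>t\<in>set ts. urep (uclass U (E t)) i = E t i} \<in> U"
    by (rule ultra_list_all[OF u]) (rule urep_uclass[OF u])
  have "{i. fint M f (map (\<lambda>t. urep (uclass U (E t)) i) ts) = fint M f (map (\<lambda>t. E t i) ts)} \<in> U"
    by (rule ultrafilterD(4)[OF u W]) (auto intro!: arg_cong[where f="fint M f"])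
  then have "uclass U (\<lambda>i. fint M f (map (\<lambda>t. urep (uclass U (E t)) i) ts)) = uclass U (\<lambda>i. fint M f (map (\<lambda>t. E t i) ts))"
    using uclass_eq[OF u] by blast
  also have "(\<lambda>i. fint M f (map (\<lambda>t. E t i) ts)) = (\<lambda>i. eval M (\<lambda>n. \<sigma> n i) (Fn f ts))"
    unfolding E_def by (simp add: comp_def)
  finally show ?case using l by simp
qed

lemma los_Ex:
  assumes u: "ultrafilter U" and M: "is_struc fa M"
    and IH: "\<And>\<sigma>. sat (ultraprod U M) (\<lambda>n. uclass U (\<sigma> n)) p \<longleftrightarrow> {i. sat M (\<lambda>n. \<sigma> n i) p} \<in> U"
  shows "sat (ultraprod U M) (\<lambda>n. uclass U (\<sigma> n)) (Ex x p) \<longleftrightarrow> {i. sat M (\<lambda>n. \<sigma> n i) (Ex x p)} \<in> U"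
proof -
  have upd: "(\<lambda>n. uclass U (\<sigma> n))(x := uclass U f) = (\<lambda>n. uclass U ((\<sigma>(x := f)) n))" for f
    by (auto simp: fun_eq_iff)
  have upd2: "(\<lambda>n. (\<sigma>(x := f)) n i) = (\<lambda>n. \<sigma> n i)(x := f i)" for f i by auto
  have ih: "sat (ultraprod U M) ((\<lambda>n. uclass U (\<sigma> n))(x := uclass U f)) p
      \<longleftrightarrow> {i. sat M ((\<lambda>n. \<sigma> n i)(x := f i)) p} \<in> U" for f
    unfolding upd IH upd2 ..
  show ?thesis
  proof
    assume "sat (ultraprod U M) (\<lambda>n. uclass U (\<sigma> n)) (Ex x p)"
    then obtain f where f: "\<forall>i. f i \<in> dom M" "sat (ultraprod U M) ((\<lambda>n. uclass U (\<sigma> n))(x := uclass U f)) p"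
      by (auto simp: ultraprod_simps)
    then have "{i. sat M ((\<lambda>n. \<sigma> n i)(x := f i)) p} \<in> U" using ih by blast
    then show "{i. sat M (\<lambda>n. \<sigma> n i) (Ex x p)} \<in> U"
      by (rule ultrafilterD(4)[OF u]) (use f(1) in auto)
  next
    assume A: "{i. sat M (\<lambda>n. \<sigma> n i) (Ex x p)} \<in> U"
    define f where "f i = (SOME a. a \<in> dom M \<and> (sat M ((\<lambda>n. \<sigma> n i)(x := a)) p \<or>
      \<not> (\<exists>a\<in>dom M. sat M ((\<lambda>n. \<sigma> n i)(x := a)) p)))" for i
    have f: "f i \<in> dom M \<and> (sat M ((\<lambda>n. \<sigma> n i)(x := f i)) p \<or> \<not> (\<exists>a\<in>dom M. sat M ((\<lambda>n. \<sigma> n i)(x := a)) p))" for i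
    proof -
      have "\<exists>a. a \<in> dom M \<and> (sat M ((\<lambda>n. \<sigma> n i)(x := a)) p \<or> \<not> (\<exists>a\<in>dom M. sat M ((\<lambda>n. \<sigma> n i)(x := a)) p))"
        using some_elem_dom[OF M] by blast
      then show ?thesis unfolding f_def by (rule someI_ex)
    qed
    have "{i. sat M ((\<lambda>n. \<sigma> n i)(x := f i)) p} \<in> U"
      by (rule ultrafilterD(4)[OF u A]) (use f in auto)
    then have "sat (ultraprod U M) ((\<lambda>n. uclass U (\<sigma> n))(x := uclass U f)) p" using ih by blast
    moreover have "uclass U f \<in> dom (ultraprod U M)" using f by (auto simp: ultraprod_simps)
    ultimately show "sat (ultraprod U M) (\<lambda>n. uclass U (\<sigma> n)) (Ex x p)" by auto
  qed
qed

theorem los: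
  assumes u: "ultrafilter U" and M: "is_struc fa M"
  shows "sat (ultraprod U M) (\<lambda>n. uclass U (\<sigma> n)) p \<longleftrightarrow> {i. sat M (\<lambda>n. \<sigma> n i) p} \<in> U"
proof (induction p arbitrary: \<sigma>)
  case Bot then show ?case using ultra_const[OF u, of False] by simp
next
  case Top then show ?case using ultra_const[OF u, of True] by simp
next
  case (Eq t u') then show ?case by (simp add: eval_ultraprod[OF u] uclass_eq[OF u])
next
  case (Rel r ts)
  define E where "E t = (\<lambda>i. eval M (\<lambda>n. \<sigma> n i) t)" for t
  have m: "map (eval (ultraprod U M) (\<lambda>n. uclass U (\<sigma> n))) ts = map (\<lambda>t. uclass U (E t)) ts"
    unfolding E_def by (simp add: eval_ultraprod[OF u])
  have W: "{i. \<forall>t\<in>set ts. urep (uclass U (E t)) i = E t i} \<in> U"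
    by (rule ultra_list_all[OF u]) (rule urep_uclass[OF u])
  have "{i. rint M r (map (\<lambda>c. urep c i) (map (\<lambda>t. uclass U (E t)) ts))} \<in> U \<longleftrightarrow>
        {i. rint M r (map (\<lambda>t. E t i) ts)} \<in> U"
    by (rule ultra_cong[OF u W]) (auto intro!: arg_cong[where f="rint M r"])
  moreover have "(\<lambda>i. rint M r (map (\<lambda>t. E t i) ts)) = (\<lambda>i. sat M (\<lambda>n. \<sigma> n i) (Rel r ts))"
    unfolding E_def by (simp add: comp_def)
  ultimately show ?case by (simp only: sat.simps m ultraprod_simps)
next
  case (Neg p) then show ?case using ultra_neg[OF u] by simp
next
  case (Conj p q) then show ?case using ultra_conj[OF u] by simp
next
  case (Disj p q) then show ?case using ultra_disj[OF u] by simp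
next
  case (Imp p q) then show ?case using ultra_imp[OF u] by simp
next
  case (Ex x p) then show ?case by (rule los_Ex[OF u M])
next
  case (All x p)
  have neg: "sat (ultraprod U M) (\<lambda>n. uclass U (\<sigma> n)) (Neg p) \<longleftrightarrow> {i. sat M (\<lambda>n. \<sigma> n i) (Neg p)} \<in> U" for \<sigma>
    using All ultra_neg[OF u] by simp
  let ?\<tau> = "\<lambda>n. uclass U (\<sigma> n)" and ?\<sigma> = "\<lambda>i n. \<sigma> n i"
  have "sat (ultraprod U M) ?\<tau> (All x p) \<longleftrightarrow> \<not> sat (ultraprod U M) ?\<tau> (Ex x (Neg p))" by simp
  also have "\<dots> \<longleftrightarrow> {i. sat M (?\<sigma> i) (Ex x (Neg p))} \<notin> U" using los_Ex[OF u M neg] by simp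
  also have "\<dots> \<longleftrightarrow> {i. \<not> sat M (?\<sigma> i) (Ex x (Neg p))} \<in> U"
    by (rule ultra_neg[OF u, symmetric])
  also have "\<dots> \<longleftrightarrow> {i. sat M (?\<sigma> i) (All x p)} \<in> U" by simp
  finally show ?case .
qed

lemma is_struc_ultraprod:
  assumes u: "ultrafilter U" and M: "is_struc fa M"
  shows "is_struc fa (ultraprod U M)"
  unfolding is_struc_def
proof (intro conjI allI impI)
  obtain a0 where a0: "a0 \<in> dom M" using M unfolding is_struc_def by auto
  have "uclass U (\<lambda>i. a0) \<in> dom (ultraprod U M)" using a0 by (auto simp: ultraprod_simps)
  then show "dom (ultraprod U M) \<noteq> {}" by auto
next
  fix f cs assume A: "length cs = fa f \<and> set cs \<subseteq> dom (ultraprod U M)"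
  obtain a0 where a0: "a0 \<in> dom M" using M unfolding is_struc_def by auto
  have each: "{i. urep c i \<in> dom M} \<in> U" if "c \<in> set cs" for c
  proof -
    have "c \<in> dom (ultraprod U M)" using A that by auto
    then obtain g where g: "c = uclass U g" "\<forall>i. g i \<in> dom M" by (auto simp: ultraprod_simps)
    show ?thesis by (rule ultrafilterD(4)[OF u urep_uclass[OF u, of g]]) (use g in auto)
  qed
  have W: "{i. \<forall>c\<in>set cs. urep c i \<in> dom M} \<in> U" by (rule ultra_list_all[OF u]) (rule each)
  define \<phi> where "\<phi> i = fint M f (map (\<lambda>c. urep c i) cs)" for i
  define \<psi> where "\<psi> i = (if \<phi> i \<in> dom M then \<phi> i else a0)" for i
  have "{i. \<phi> i \<in> dom M} \<in> U"
  proof (rule ultrafilterD(4)[OF u W], rule subsetI)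
    fix i assume "i \<in> {i. \<forall>c\<in>set cs. urep c i \<in> dom M}"
    then have "set (map (\<lambda>c. urep c i) cs) \<subseteq> dom M" "length (map (\<lambda>c. urep c i) cs) = fa f" using A by auto
    then show "i \<in> {i. \<phi> i \<in> dom M}" using M unfolding is_struc_def \<phi>_def by blast
  qed
  then have "{i. \<phi> i = \<psi> i} \<in> U" by (rule ultrafilterD(4)[OF u]) (auto simp: \<psi>_def)
  then have "uclass U \<phi> = uclass U \<psi>" using uclass_eq[OF u] by blast
  moreover have "uclass U \<psi> \<in> dom (ultraprod U M)" using a0 by (auto simp: ultraprod_simps \<psi>_def)
  moreover have "fint (ultraprod U M) f cs = uclass U \<phi>" unfolding ultraprod_simps by (rule arg_cong[where f="uclass U"]) (simp add: \<phi>_def fun_eq_iff)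
  ultimately show "fint (ultraprod U M) f cs \<in> dom (ultraprod U M)" by simp
qed

lemma uclass_urep: "ultrafilter U \<Longrightarrow> c \<in> dom (ultraprod U M) \<Longrightarrow> uclass U (urep c) = c"
proof -
  assume u: "ultrafilter U" and c: "c \<in> dom (ultraprod U M)"
  then obtain g where g: "c = uclass U g" by (auto simp: ultraprod_simps)
  show ?thesis using urep_uclass[OF u, of g] uclass_eq[OF u] g by blast
qed

lemma sat_ultraprod:
  assumes u: "ultrafilter U" and M: "is_struc fa M" and r: "range \<tau> \<subseteq> dom (ultraprod U M)"
  shows "sat (ultraprod U M) \<tau> p \<longleftrightarrow> {i. sat M (\<lambda>n. urep (\<tau> n) i) p} \<in> U"
proof -
  have "\<tau> = (\<lambda>n. uclass U (urep (\<tau> n)))"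
  proof (rule ext)
    fix n
    have "\<tau> n \<in> dom (ultraprod U M)" using r by auto
    then show "\<tau> n = uclass U (urep (\<tau> n))" using uclass_urep[OF u] by metis
  qed
  then have "sat (ultraprod U M) \<tau> p = sat (ultraprod U M) (\<lambda>n. uclass U (urep (\<tau> n))) p" by simp
  also have "\<dots> \<longleftrightarrow> {i. sat M (\<lambda>n. urep (\<tau> n) i) p} \<in> U" by (rule los[OF u M])
  finally show ?thesis .
qed

lemma is_model_ultraprod:
  assumes u: "ultrafilter U" and T: "is_theory fa ra T" and M: "is_model fa T M"
  shows "is_model fa T (ultraprod U M)"
proof -
  have Ms: "is_struc fa M" using M unfolding is_model_def by simp
  obtain a0 where a0: "a0 \<in> dom M" using Ms unfolding is_struc_def by auto
  have "sat (ultraprod U M) \<tau> p" if p: "p \<in> T" and r: "range \<tau> \<subseteq> dom (ultraprod U M)" for p \<tau>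
  proof -
    have fv: "fv p = {}" using T p unfolding is_theory_def sentence_def by auto
    have "sat M (\<lambda>n. urep (\<tau> n) i) p = sat M (\<lambda>n. a0) p" for i by (rule sat_cong) (simp add: fv)
    moreover have "sat M (\<lambda>n. a0) p" using M p a0 unfolding is_model_def by auto
    ultimately have "{i. sat M (\<lambda>n. urep (\<tau> n) i) p} = UNIV" by auto
    then show ?thesis using sat_ultraprod[OF u Ms r] ultrafilterD(1)[OF u] by simp
  qed
  then show ?thesis using is_struc_ultraprod[OF u Ms] unfolding is_model_def by blast
qed

lemma elementary_diagonal:
  assumes u: "ultrafilter U" and M: "is_struc fa M"
  shows "elementary fa ra M (ultraprod U M) (\<lambda>a. uclass U (\<lambda>i. a))"
proof (rule elementaryI)
  show "(\<lambda>a. uclass U (\<lambda>i. a)) ` dom M \<subseteq> dom (ultraprod U M)" by (auto simp: ultraprod_simps)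
  show "sat M s p \<longleftrightarrow> sat (ultraprod U M) ((\<lambda>a. uclass U (\<lambda>i. a)) \<circ> s) p" for p s
  proof -
    have "(\<lambda>a. uclass U (\<lambda>i. a)) \<circ> s = (\<lambda>n. uclass U (\<lambda>i. s n))" by (auto simp: fun_eq_iff)
    then have "sat (ultraprod U M) ((\<lambda>a. uclass U (\<lambda>i. a)) \<circ> s) p \<longleftrightarrow> {i. sat M s p} \<in> U"
      using los[OF u M, of "\<lambda>n i. s n"] by simp
    then show ?thesis using ultra_const[OF u] by simp
  qed
qed

lemma immersion_inj_on:
  assumes "immersion fa ra M N k"
  shows "inj_on k (dom M)"
proof (rule inj_onI)
  fix a a' assume a: "a \<in> dom M" "a' \<in> dom M" "k a = k a'"
  let ?p = "Eq (Var 0) (Var 1)"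
  let ?s = "\<lambda>n. if n = 0 then a else a'"
  have "coherent ?p" using coherent_foldr_Ex[of ?p "[]"] by simp
  moreover have "range ?s \<subseteq> dom M" using a by auto
  moreover have "sat N (k \<circ> ?s) ?p" using a by simp
  ultimately have "sat M ?s ?p" using assms unfolding immersion_def by (metis wff.simps(3) wft.simps(1))
  then show "a = a'" by simp
qed

lemma immersion_reflects_foldr_Ex:
  assumes imm: "immersion fa ra M N k" and \<psi>: "wff fa ra \<psi>" "pos_qf \<psi>" and \<tau>: "range \<tau> \<subseteq> dom M"
    and sat: "sat N \<sigma> \<psi>" and fixed: "\<And>n. n \<notin> set xs \<Longrightarrow> \<sigma> n = k (\<tau> n)"
    and free: "\<And>n. n \<in> set xs \<Longrightarrow> \<sigma> n \<in> dom N"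
  obtains u where "\<forall>n. n \<notin> set xs \<longrightarrow> u n = \<tau> n" "\<forall>n\<in>set xs. u n \<in> dom M" "sat M u \<psi>"
proof -
  have "sat N (k \<circ> \<tau>) (foldr Ex xs \<psi>)"
    unfolding sat_foldr_Ex using fixed free sat by (intro exI[of _ \<sigma>]) auto
  then have "sat M \<tau> (foldr Ex xs \<psi>)"
    using imm \<tau> \<psi> coherent_foldr_Ex[OF \<psi>(2)] wff_foldr_Ex unfolding immersion_def by blast
  then show thesis using that unfolding sat_foldr_Ex by blast
qed

definition atomic_diagram :: "('f \<Rightarrow> nat) \<Rightarrow> ('r \<Rightarrow> nat) \<Rightarrow> ('n,'f,'r) struc \<Rightarrow> (('f,'r) fm \<times> (nat \<Rightarrow> 'n)) set" where
  "atomic_diagram fa ra N = {(p,s). wff fa ra p \<and> atomic p \<and> range s \<subseteq> dom N \<and> sat N s p}"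

text \<open>Parameter b of the diagram becomes the variable idx b.\<close>

lemma finite_atomic_diagram_formula:
  fixes M :: "('m,'f,'r) struc" and N :: "('n,'f,'r) struc"
  assumes F: "finite F" "F \<subseteq> atomic_diagram fa ra N"
  obtains ps idx \<psi>
  where "set ps \<subseteq> dom N" "\<And>b. b \<in> set ps \<Longrightarrow> idx b < length ps \<and> ps ! idx b = b"
    "wff fa ra \<psi>" "pos_qf \<psi>"
    "\<And>v. \<forall>b\<in>set ps. v (idx b) = b \<Longrightarrow> sat N v \<psi>"
    "\<And>v g. \<forall>b\<in>set ps. v (idx b) = g b \<Longrightarrow> sat M v \<psi> \<longleftrightarrow> (\<forall>(p,s)\<in>F. sat M (g \<circ> s) p)"
proof -
  define P where "P = (\<Union>(p,s)\<in>F. s ` fv p)"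
  have "finite P" unfolding P_def using F(1) finite_fv by auto
  then obtain ps where ps: "set ps = P" using finite_list by blast
  define idx where "idx b = (SOME i. i < length ps \<and> ps ! i = b)" for b
  have idx: "idx b < length ps \<and> ps ! idx b = b" if "b \<in> set ps" for b
    unfolding idx_def using that by (metis (mono_tags, lifting) in_set_conv_nth someI_ex)
  obtain Fl where Fl: "set Fl = F" using finite_list[OF F(1)] by blast
  define \<psi> where "\<psi> = Conjs (map (\<lambda>(p,s). rename_atomic (idx \<circ> s) p) Fl)"
  have Ffact: "wff fa ra p \<and> atomic p \<and> range s \<subseteq> dom N" if "(p,s) \<in> F" for p s
    using F(2) that unfolding atomic_diagram_def by auto
  have sP: "s n \<in> set ps" if "(p,s) \<in> F" "n \<in> fv p" for p s n using that unfolding ps P_def by blast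
  show thesis
  proof (rule that)
    show "set ps \<subseteq> dom N" using F(2) unfolding ps P_def atomic_diagram_def by auto
    show "wff fa ra \<psi>" unfolding \<psi>_def wff_Conjs using Fl Ffact wff_rename_atomic by fastforce
    show "pos_qf \<psi>" unfolding \<psi>_def by (rule pos_qf_Conjs) (auto simp: pos_qf_rename_atomic)
    have sat: "sat M' v \<psi> \<longleftrightarrow> (\<forall>(p,s)\<in>F. sat M' (g \<circ> s) p)" if vg: "\<forall>b\<in>set ps. v (idx b) = g b"
      for M' :: "('c,'f,'r) struc" and v :: "nat \<Rightarrow> 'c" and g
    proof -
      have "sat M' v (rename_atomic (idx \<circ> s) p) \<longleftrightarrow> sat M' (g \<circ> s) p" if "(p,s) \<in> F" for p s
      proof -
        have "sat M' v (rename_atomic (idx \<circ> s) p) \<longleftrightarrow> sat M' (v \<circ> (idx \<circ> s)) p"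
          using sat_rename_atomic Ffact[OF that] by blast
        also have "\<dots> \<longleftrightarrow> sat M' (g \<circ> s) p" by (rule sat_cong) (use vg sP[OF that] in auto)
        finally show ?thesis .
      qed
      then show ?thesis unfolding \<psi>_def sat_Conjs using Fl by auto
    qed
    show "sat M v \<psi> \<longleftrightarrow> (\<forall>(p,s)\<in>F. sat M (g \<circ> s) p)" if "\<forall>b\<in>set ps. v (idx b) = g b" for v g
      using sat[OF that] .
    show "sat N v \<psi>" if "\<forall>b\<in>set ps. v (idx b) = b" for v
      using sat[of v id] that F(2) unfolding atomic_diagram_def by auto
  qed (use idx in blast)
qed

lemma immersion_pullback_finite_diagram:
  fixes M :: "('m,'f,'r) struc" and N :: "('n,'f,'r) struc"
  assumes M: "is_struc fa M" and imm: "immersion fa ra M N k"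
    and F: "finite F" "F \<subseteq> atomic_diagram fa ra N"
  shows "\<exists>g. (\<forall>b\<in>dom N. g b \<in> dom M) \<and> (\<forall>a\<in>dom M. g (k a) = a) \<and> (\<forall>(p,s)\<in>F. sat M (g \<circ> s) p)"
proof -
  obtain ps idx \<psi>
    where ps: "set ps \<subseteq> dom N" and idx: "\<And>b. b \<in> set ps \<Longrightarrow> idx b < length ps \<and> ps ! idx b = b"
    and \<psi>: "wff fa ra \<psi>" "pos_qf \<psi>"
    and satN: "\<And>v. \<forall>b\<in>set ps. v (idx b) = b \<Longrightarrow> sat N v \<psi>"
    and satM: "\<And>v g. \<forall>b\<in>set ps. v (idx b) = g b \<Longrightarrow> sat M v \<psi> \<longleftrightarrow> (\<forall>(p,s)\<in>F. sat M (g \<circ> s) p)"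
    by (rule finite_atomic_diagram_formula[OF F, where M = M]) blast
  define ki where "ki = inv_into (dom M) k"
  have kik: "ki (k a) = a" if "a \<in> dom M" for a
    unfolding ki_def using immersion_inj_on[OF imm] that by simp
  have kki: "k (ki b) = b \<and> ki b \<in> dom M" if "b \<in> k ` dom M" for b
    unfolding ki_def using that by (auto intro: inv_into_into simp: f_inv_into_f)
  define a0 where "a0 = some_elem M"
  have a0: "a0 \<in> dom M" unfolding a0_def by (rule some_elem_dom[OF M])
  \<comment> \<open>variables for parameters outside the image of k are quantified existentially\<close>
  define \<sigma> where "\<sigma> i = (if i < length ps then ps ! i else k a0)" for i
  define \<tau> where "\<tau> i = (if i < length ps \<and> ps ! i \<in> k ` dom M then ki (ps ! i) else a0)" for i
  define xs where "xs = filter (\<lambda>i. ps ! i \<notin> k ` dom M) [0..<length ps]"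
  have "sat N \<sigma> \<psi>" using satN idx unfolding \<sigma>_def by simp
  moreover have "range \<tau> \<subseteq> dom M" unfolding \<tau>_def using kki a0 by auto
  moreover have "\<sigma> n = k (\<tau> n)" if "n \<notin> set xs" for n
    using that kki unfolding \<sigma>_def \<tau>_def xs_def by auto
  moreover have "\<sigma> n \<in> dom N" if "n \<in> set xs" for n
    using that ps unfolding \<sigma>_def xs_def by auto
  ultimately obtain u where u: "\<forall>n. n \<notin> set xs \<longrightarrow> u n = \<tau> n" "\<forall>n\<in>set xs. u n \<in> dom M" "sat M u \<psi>"
    using immersion_reflects_foldr_Ex[OF imm \<psi>] by blast
  define g where "g b = (if b \<in> k ` dom M then ki b else if b \<in> set ps then u (idx b) else a0)" for b
  have "u (idx b) = g b" if b: "b \<in> set ps" for b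
  proof (cases "b \<in> k ` dom M")
    case True
    then have "idx b \<notin> set xs" using idx[OF b] unfolding xs_def by auto
    then show ?thesis using u(1) idx[OF b] True unfolding \<tau>_def g_def by auto
  qed (use b g_def in simp)
  then have "\<forall>(p,s)\<in>F. sat M (g \<circ> s) p" using satM u(3) by blast
  moreover have "g b \<in> dom M" for b
    using kki a0 u(2) idx unfolding g_def xs_def by auto
  moreover have "\<forall>a\<in>dom M. g (k a) = a" using kik unfolding g_def by auto
  ultimately show ?thesis by blast
qed

section \<open>Amalgamation along an immersion\<close>

lemma finite_subsets_filter:
  fixes X :: "'a set"
  defines "cone F0 \<equiv> {F. finite F \<and> F0 \<subseteq> F \<and> F \<subseteq> X}"
  shows "proper_filter {A. \<exists>F0. finite F0 \<and> F0 \<subseteq> X \<and> cone F0 \<subseteq> A}"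
proof (rule filterI)
  show "{} \<notin> {A. \<exists>F0. finite F0 \<and> F0 \<subseteq> X \<and> cone F0 \<subseteq> A}"
    unfolding cone_def by blast
next
  fix A B assume "A \<in> {A. \<exists>F0. finite F0 \<and> F0 \<subseteq> X \<and> cone F0 \<subseteq> A}" "B \<in> {A. \<exists>F0. finite F0 \<and> F0 \<subseteq> X \<and> cone F0 \<subseteq> A}"
  then obtain F0 F1 where "finite F0" "F0 \<subseteq> X" "cone F0 \<subseteq> A" "finite F1" "F1 \<subseteq> X" "cone F1 \<subseteq> B"
    by blast
  moreover have "cone (F0 \<union> F1) \<subseteq> cone F0 \<inter> cone F1" unfolding cone_def by auto
  ultimately show "A \<inter> B \<in> {A. \<exists>F0. finite F0 \<and> F0 \<subseteq> X \<and> cone F0 \<subseteq> A}"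
    by (intro CollectI exI[of _ "F0 \<union> F1"]) blast
qed blast+

text \<open>The ultrapower of M over finite pieces of the atomic diagram of N: each piece is pulled back
into M, and the ultrafilter makes the pulled-back maps cohere into a homomorphism.\<close>

lemma immersion_ultrapower_amalgam:
  fixes M :: "('m,'f,'r) struc" and N :: "('n,'f,'r) struc"
  assumes T: "is_theory fa ra T" and M: "is_model fa T M" and imm: "immersion fa ra M N k"
  obtains D :: "(((('f,'r) fm \<times> (nat \<Rightarrow> 'n)) set \<Rightarrow> 'm) set, 'f, 'r) struc" and d g
  where "is_model fa T D" "hom fa ra N D g" "elementary fa ra M D d" "\<forall>a\<in>dom M. g (k a) = d a"
proof -
  have Ms: "is_struc fa M" using M unfolding is_model_def by simp
  define Fa where "Fa = atomic_diagram fa ra N"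
  obtain U where u: "ultrafilter U"
    and BU: "{A. \<exists>F0. finite F0 \<and> F0 \<subseteq> Fa \<and> {F. finite F \<and> F0 \<subseteq> F \<and> F \<subseteq> Fa} \<subseteq> A} \<subseteq> U"
    using ultrafilter_exists[OF finite_subsets_filter] by blast
  define good where "good g F \<longleftrightarrow> (\<forall>b\<in>dom N. g b \<in> dom M) \<and> (\<forall>a\<in>dom M. g (k a) = a) \<and>
    (finite F \<and> F \<subseteq> Fa \<longrightarrow> (\<forall>(p,s)\<in>F. sat M (g \<circ> s) p))" for g F
  define gF where "gF F = (SOME g. good g F)" for F
  have gF: "good (gF F) F" for F
  proof -
    define F' where "F' = (if finite F \<and> F \<subseteq> Fa then F else {})"
    have "finite F'" "F' \<subseteq> atomic_diagram fa ra N" unfolding F'_def Fa_def by auto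
    from immersion_pullback_finite_diagram[OF Ms imm this]
    obtain g where "\<forall>b\<in>dom N. g b \<in> dom M" "\<forall>a\<in>dom M. g (k a) = a" "\<forall>(p,s)\<in>F'. sat M (g \<circ> s) p"
      by blast
    then have "good g F" unfolding good_def F'_def by simp
    then show ?thesis unfolding gF_def by (rule someI[where P = "\<lambda>g. good g F"])
  qed
  define g where "g b = uclass U (\<lambda>F. gF F b)" for b
  define d where "d a = uclass U (\<lambda>F. a)" for a :: 'm
  have "hom fa ra N (ultraprod U M) g"
    unfolding hom_def
  proof (intro conjI allI impI)
    show "g ` dom N \<subseteq> dom (ultraprod U M)" using gF unfolding g_def good_def by (auto simp: ultraprod_simps)
    fix p s assume ps: "wff fa ra p \<and> atomic p \<and> range s \<subseteq> dom N \<and> sat N s p"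
    then have "(p, s) \<in> Fa" unfolding Fa_def atomic_diagram_def by simp
    then have "{F. finite F \<and> {(p, s)} \<subseteq> F \<and> F \<subseteq> Fa} \<in> U"
      by (intro subsetD[OF BU] CollectI exI[of _ "{(p, s)}"]) simp
    then have "{F. sat M (\<lambda>n. gF F (s n)) p} \<in> U"
      by (rule ultrafilterD(4)[OF u]) (use gF in \<open>auto simp: good_def comp_def\<close>)
    moreover have "g \<circ> s = (\<lambda>n. uclass U (\<lambda>F. gF F (s n)))" unfolding g_def by (simp add: comp_def)
    ultimately show "sat (ultraprod U M) (g \<circ> s) p" using los[OF u Ms, of "\<lambda>n F. gF F (s n)" p] by simp
  qed
  moreover have "elementary fa ra M (ultraprod U M) d"
    unfolding d_def by (rule elementary_diagonal[OF u Ms])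
  moreover have "\<forall>a\<in>dom M. g (k a) = d a" using gF unfolding g_def d_def good_def by simp
  ultimately show ?thesis using that[of "ultraprod U M" g d] is_model_ultraprod[OF u T M] by blast
qed

lemma amalgam_into_code:
  fixes M N :: "(('f,'r) code,'f,'r) struc" and D :: "('d,'f,'r) struc"
  assumes T: "is_theory fa ra T" and D: "is_model fa T D" and M: "is_struc fa M"
    and g: "hom fa ra N D g" and d: "elementary fa ra M D d" and comm: "\<forall>a\<in>dom M. g (k a) = d a"
  obtains C :: "(('f,'r) code,'f,'r) struc" and d' g'
  where "is_model fa T C" "hom fa ra N C g'" "elementary fa ra M C d'" "\<forall>a\<in>dom M. g' (k a) = d' a"
proof -
  have Ds: "is_struc fa D" using D unfolding is_model_def by simp
  have gD: "g b \<in> dom D" if "b \<in> dom N" for b using hom_dom[OF g that] .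
  have dD: "d a \<in> dom D" if "a \<in> dom M" for a using hom_dom[OF elementary_imp_hom[OF d] that] .
  define a0 where "a0 = some_elem M"
  have a0: "a0 \<in> dom M" unfolding a0_def by (rule some_elem_dom[OF M])
  define L where "L bx = (case bx of (True, x) \<Rightarrow> if x \<in> dom N then g x else d a0
    | (False, x) \<Rightarrow> if x \<in> dom M then d x else d a0)" for bx
  have "range L \<subseteq> dom D" unfolding L_def using gD dD a0 by (auto split: bool.split)
  then obtain C :: "(('f,'r) code,'f,'r) struc" and j
    where C: "is_struc fa C" "elementary fa ra C D j" "range L \<subseteq> j ` dom C"
    by (rule downward_LS[OF Ds])
  have LC: "L bx \<in> j ` dom C" for bx by (rule subsetD[OF C(3) rangeI])
  have gC: "g ` dom N \<subseteq> j ` dom C"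
  proof (rule image_subsetI)
    fix b assume "b \<in> dom N"
    then show "g b \<in> j ` dom C" using LC[of "(True, b)"] unfolding L_def by simp
  qed
  have dC: "d ` dom M \<subseteq> j ` dom C"
  proof (rule image_subsetI)
    fix a assume "a \<in> dom M"
    then show "d a \<in> j ` dom C" using LC[of "(False, a)"] unfolding L_def by simp
  qed
  show thesis
  proof (rule that)
    show "is_model fa T C" by (rule is_model_if_elementary[OF T D C(1,2)])
    show "hom fa ra N C (inv_into (dom C) j \<circ> g)" by (rule elementary_factor(2)[OF C(2) gC g])
    show "elementary fa ra M C (inv_into (dom C) j \<circ> d)" by (rule elementary_factor(3)[OF C(2) dC d])
    show "\<forall>a\<in>dom M. (inv_into (dom C) j \<circ> g) (k a) = (inv_into (dom C) j \<circ> d) a" using comm by simp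
  qed
qed

lemma code_immersion_amalgamation:
  fixes M N :: "(('f,'r) code,'f,'r) struc"
  assumes T: "is_theory fa ra T" and M: "is_model fa T M" and imm: "immersion fa ra M N k"
  obtains C :: "(('f,'r) code,'f,'r) struc" and d g
  where "is_model fa T C" "hom fa ra N C g" "elementary fa ra M C d" "\<forall>a\<in>dom M. g (k a) = d a"
proof -
  have "is_struc fa M" using M unfolding is_model_def by simp
  obtain D :: "(((('f,'r) fm \<times> (nat \<Rightarrow> ('f,'r) code)) set \<Rightarrow> ('f,'r) code) set, 'f, 'r) struc" and d g
    where "is_model fa T D" "hom fa ra N D g" "elementary fa ra M D d" "\<forall>a\<in>dom M. g (k a) = d a"
    by (rule immersion_ultrapower_amalgam[OF T M imm])
  from amalgam_into_code[OF T this(1) \<open>is_struc fa M\<close> this(2-4)]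
  obtain C :: "(('f,'r) code,'f,'r) struc" and d' g'
    where "is_model fa T C" "hom fa ra N C g'" "elementary fa ra M C d'" "\<forall>a\<in>dom M. g' (k a) = d' a" .
  then show thesis by (rule that)
qed

lemma immersion_if_pos_model_complete:
  assumes "pos_model_complete fa ra T TYPE('a) TYPE('b)"
    and "is_model fa T A" "is_model fa T B" "hom fa ra A B h"
  shows "immersion fa ra (A :: ('a,'f,'r) struc) (B :: ('b,'f,'r) struc) h"
  using assms unfolding pos_model_complete_def by blast

lemma immersion_reflects_atomic:
  assumes "immersion fa ra A B h" "wff fa ra p" "atomic p" "range s \<subseteq> dom A" "sat B (h \<circ> s) p"
  shows "sat A s p"
proof -
  have "pos_qf p" using assms(3) by (cases p) auto
  then have "coherent p" using coherent_foldr_Ex[of p "[]"] by simp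
  then show ?thesis using assms unfolding immersion_def by blast
qed

text \<open>The witness found in N is transported along N \<rightarrow> C by the induction hypothesis and then
reflected into M by elementarity of M \<rightarrow> C.\<close>

lemma code_hom_elementary_Ex:
  fixes M N :: "(('f,'r) code,'f,'r) struc"
  assumes T: "is_theory fa ra T" and pmc: "pos_model_complete fa ra T TYPE(('f,'r) code) TYPE(('f,'r) code)"
    and IH: "\<And>(M' :: (('f,'r) code,'f,'r) struc) (N' :: (('f,'r) code,'f,'r) struc) k' s'.
      is_model fa T M' \<Longrightarrow> is_model fa T N' \<Longrightarrow> hom fa ra M' N' k' \<Longrightarrow> range s' \<subseteq> dom M' \<Longrightarrow>
      sat M' s' p \<longleftrightarrow> sat N' (k' \<circ> s') p"
    and M: "is_model fa T M" and N: "is_model fa T N" and k: "hom fa ra M N k" and s: "range s \<subseteq> dom M"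
    and wff: "wff fa ra (Ex x p)"
  shows "sat M s (Ex x p) \<longleftrightarrow> sat N (k \<circ> s) (Ex x p)"
proof
  assume "sat M s (Ex x p)"
  then obtain a where a: "a \<in> dom M" "sat M (s(x := a)) p" by auto
  have "range (s(x := a)) \<subseteq> dom M" using s a(1) by auto
  then have "sat N (k \<circ> s(x := a)) p" using IH[OF M N k] a(2) by blast
  moreover have "k \<circ> s(x := a) = (k \<circ> s)(x := k a)" by auto
  ultimately show "sat N (k \<circ> s) (Ex x p)" using hom_dom[OF k a(1)] by auto
next
  assume "sat N (k \<circ> s) (Ex x p)"
  then obtain b where b: "b \<in> dom N" "sat N ((k \<circ> s)(x := b)) p" by auto
  obtain C :: "(('f,'r) code,'f,'r) struc" and d g
    where C: "is_model fa T C" "hom fa ra N C g" "elementary fa ra M C d" "\<forall>a\<in>dom M. g (k a) = d a"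
    by (rule code_immersion_amalgamation[OF T M immersion_if_pos_model_complete[OF pmc M N k]])
  have "range ((k \<circ> s)(x := b)) \<subseteq> dom N" using s hom_dom[OF k] b(1) by auto
  then have "sat C (g \<circ> (k \<circ> s)(x := b)) p" using IH[OF N C(1,2)] b(2) by blast
  moreover have "g \<circ> (k \<circ> s)(x := b) = (d \<circ> s)(x := g b)" using C(4) s by (auto simp: fun_eq_iff)
  ultimately have "sat C (d \<circ> s) (Ex x p)" using hom_dom[OF C(2) b(1)] by auto
  then show "sat M s (Ex x p)" using elementaryD[OF C(3) wff s] by blast
qed

lemma code_hom_elementary:
  fixes M N :: "(('f,'r) code,'f,'r) struc"
  assumes T: "is_theory fa ra T" and pmc: "pos_model_complete fa ra T TYPE(('f,'r) code) TYPE(('f,'r) code)"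
  shows "wff fa ra p \<Longrightarrow> is_model fa T M \<Longrightarrow> is_model fa T N \<Longrightarrow> hom fa ra M N k \<Longrightarrow> range s \<subseteq> dom M \<Longrightarrow>
    sat M s p \<longleftrightarrow> sat N (k \<circ> s) p"
proof (induction p arbitrary: M N k s)
  case (Eq t u)
  then show ?case using immersion_reflects_atomic[OF immersion_if_pos_model_complete[OF pmc]]
    unfolding hom_def by (metis atomic.simps(1))
next
  case (Rel r ts)
  then show ?case using immersion_reflects_atomic[OF immersion_if_pos_model_complete[OF pmc]]
    unfolding hom_def by (metis atomic.simps(2))
next
  case (Ex x p)
  have "wff fa ra p" using Ex.prems(1) by simp
  show ?case
    by (rule code_hom_elementary_Ex[OF T pmc _ Ex.prems(2-5) Ex.prems(1)]) (rule Ex.IH[OF \<open>wff fa ra p\<close>])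
next
  case (All x p)
  have "wff fa ra p" using All.prems(1) by simp
  have IH: "sat M' s' (Neg p) \<longleftrightarrow> sat N' (k' \<circ> s') (Neg p)"
    if "is_model fa T M'" "is_model fa T N'" "hom fa ra M' N' k'" "range s' \<subseteq> dom M'"
    for M' N' :: "(('f,'r) code,'f,'r) struc" and k' s'
    using All.IH[OF \<open>wff fa ra p\<close> that] unfolding sat.simps(5) by blast
  have wff: "wff fa ra (Ex x (Neg p))" using All.prems(1) by simp
  have "sat M s (Ex x (Neg p)) \<longleftrightarrow> sat N (k \<circ> s) (Ex x (Neg p))"
    by (rule code_hom_elementary_Ex[OF T pmc _ All.prems(2-5) wff]) (rule IH)
  then show ?case by (simp only: sat.simps) blast
qed auto

lemma hom_restrict_to_code:
  fixes A :: "('a,'f,'r) struc" and B :: "('b,'f,'r) struc" and s :: "nat \<Rightarrow> 'a"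
  assumes A: "is_struc fa A" and B: "is_struc fa B" and h: "hom fa ra A B h" and s: "range s \<subseteq> dom A"
  obtains A' B' :: "(('f,'r) code,'f,'r) struc" and jA jB h' t
  where "is_struc fa A'" "elementary fa ra A' A jA" "is_struc fa B'" "elementary fa ra B' B jB"
    "hom fa ra A' B' h'" "range t \<subseteq> dom A'" "jA \<circ> t = s" "\<forall>x\<in>dom A'. jB (h' x) = h (jA x)"
proof -
  define L :: "bool \<times> ('f,'r) code \<Rightarrow> 'a" where
    "L bx = (case snd bx of Inl n \<Rightarrow> s n | Inr _ \<Rightarrow> s 0)" for bx
  have "range L \<subseteq> dom A" using s unfolding L_def by (auto split: sum.split)
  then obtain A' :: "(('f,'r) code,'f,'r) struc" and jA
    where A': "is_struc fa A'" "elementary fa ra A' A jA" "range L \<subseteq> jA ` dom A'"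
    by (rule downward_LS[OF A])
  define L' :: "bool \<times> ('f,'r) code \<Rightarrow> 'b" where
    "L' bx = h (jA (if snd bx \<in> dom A' then snd bx else some_elem A'))" for bx
  have jA: "jA ` dom A' \<subseteq> dom A" using A'(2) unfolding elementary_def hom_def by blast
  have "h (jA x) \<in> dom B" if "x \<in> dom A'" for x using jA that hom_dom[OF h] by blast
  then have "range L' \<subseteq> dom B" using some_elem_dom[OF A'(1)] unfolding L'_def by auto
  then obtain B' :: "(('f,'r) code,'f,'r) struc" and jB
    where B': "is_struc fa B'" "elementary fa ra B' B jB" "range L' \<subseteq> jB ` dom B'"
    by (rule downward_LS[OF B])
  have "h (jA x) = L' (True, x)" if "x \<in> dom A'" for x using that unfolding L'_def by simp
  then have img: "(h \<circ> jA) ` dom A' \<subseteq> jB ` dom B'" using B'(3) by auto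
  have hom: "hom fa ra A' B' (inv_into (dom B') jB \<circ> (h \<circ> jA))"
    using elementary_factor(2)[OF B'(2) img hom_comp[OF elementary_imp_hom[OF A'(2)] h]] .
  have "s n = L (False, Inl n)" for n unfolding L_def by simp
  then have "s n \<in> jA ` dom A'" for n using A'(3) by auto
  then have t: "inv_into (dom A') jA (s n) \<in> dom A' \<and> jA (inv_into (dom A') jA (s n)) = s n" for n
    by (simp add: inv_into_into f_inv_into_f)
  show thesis
  proof (rule that[OF A' (1,2) B'(1,2) hom])
    show "range (inv_into (dom A') jA \<circ> s) \<subseteq> dom A'" using t by auto
    show "jA \<circ> (inv_into (dom A') jA \<circ> s) = s" using t by (auto simp: fun_eq_iff)
    show "\<forall>x\<in>dom A'. jB ((inv_into (dom B') jB \<circ> (h \<circ> jA)) x) = h (jA x)"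
      using elementary_factor(1)[OF B'(2) img] by simp
  qed
qed

text \<open>Positive model-completeness is only used at the carrier \<open>nat + 'f + 'r\<close>.\<close>

theorem lemma4p5:
  fixes fa :: "'f \<Rightarrow> nat" and ra :: "'r \<Rightarrow> nat"
    and T :: "('f, 'r) fm set"
    and A :: "('a, 'f, 'r) struc" and B :: "('b, 'f, 'r) struc" and h :: "'a \<Rightarrow> 'b"
  assumes "is_theory fa ra T"
    and "pos_model_complete fa ra T TYPE('a) TYPE('b)"
    and "pos_model_complete fa ra T TYPE(nat + 'f + 'r) TYPE(nat + 'f + 'r)"
    and "is_model fa T A" and "is_model fa T B"
    and "hom fa ra A B h"
  shows "elementary fa ra A B h"
proof (rule elementaryI)
  note T = assms(1) and pmc = assms(3) and A = assms(4) and B = assms(5) and h = assms(6)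
  show "h ` dom A \<subseteq> dom B" using h unfolding hom_def by blast
  have As: "is_struc fa A" "is_struc fa B" using A B unfolding is_model_def by auto
  fix p and s :: "nat \<Rightarrow> 'a" assume p: "wff fa ra p" and s: "range s \<subseteq> dom A"
  obtain A' B' :: "(('f,'r) code,'f,'r) struc" and jA jB h' t
    where A': "is_struc fa A'" "elementary fa ra A' A jA" and B': "is_struc fa B'" "elementary fa ra B' B jB"
      and h': "hom fa ra A' B' h'" and t: "range t \<subseteq> dom A'" "jA \<circ> t = s"
      and comm: "\<forall>x\<in>dom A'. jB (h' x) = h (jA x)"
    by (rule hom_restrict_to_code[OF As h s])
  have "sat A s p \<longleftrightarrow> sat A' t p" using elementaryD[OF A'(2) p t(1)] t(2) by simp
  also have "\<dots> \<longleftrightarrow> sat B' (h' \<circ> t) p"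
    using code_hom_elementary[OF T pmc p _ _ h' t(1)]
      is_model_if_elementary[OF T A A'] is_model_if_elementary[OF T B B'] by blast
  also have "\<dots> \<longleftrightarrow> sat B (jB \<circ> (h' \<circ> t)) p"
    using elementaryD[OF B'(2) p] t(1) hom_dom[OF h'] by (simp add: image_subset_iff)
  also have "jB \<circ> (h' \<circ> t) = h \<circ> s" using comm t by (auto simp: fun_eq_iff image_subset_iff)
  finally show "sat A s p \<longleftrightarrow> sat B (h \<circ> s) p" .
qed

end
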